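(* Let $F$ satisfy Assumption (A) and be of class AHa, with $k\mapsto F(\mathbf{x},k)$ in $L^1(\mathbb{R})$ for each $\mathbf{x}$ and $\mathbf{x}\mapsto\mathcal{F}_k[F(\mathbf{x},k)](1)$ in $L^1(\mathbb{R}^d)$. Then: (i) The solution $T^F$ of the spanning problem is of function type: $T^F(\varphi)=\int_{\mathbb{R}^d}\varphi(\mathbf{w})f(\mathbf{w})d\mathbf{w}$ for all $\varphi\in\mathcal{S}_e$, where $f(\mathbf{w})=-\frac12\mathcal{F}^{-1}_{\mathbf{x}}\big[\mathcal{F}_k[F(\mathbf{x},k)](1)\big](\mathbf{w})$. (ii) If $F(\mathbf{x},k)$ is $n$ times continuously differentiable in $k$ and $\partial_k^jF(\mathbf{x},\cdot)\in L^1(\mathbb{R})$ for $j\le n$, then $f(\mathbf{w})=-\frac12\mathcal{F}^{-1}_{\mathbf{x}}\big[\mathcal{F}_k[(-i)^n\partial^n_{k}F(\mathbf{x},k)](1)\big](\mathbf{w})$; in particular for $n=2$, $f(\mathbf{w})=\frac12\mathcal{F}^{-1}_{\mathbf{x}}\big[\mathcal{F}_k[\partial^2_{k}F(\mathbf{x},k)](1)\big](\mathbf{w})$. (iii) If $\partial_kF$ and $\partial^2_kF$ exist and are in $L^1(\mathbb{R})$ in $k$, and $\frac12\partial^2_kF(\mathbf{x},k)=\mathcal{R}g(\mathbf{x},k)$ for some $g\in L^1(\mathbb{R}^d)$, then $f=g$ almost everywhere.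
   Context: Fix $d\ge1$. Fourier transform $\mathcal{F}f(\mathbf{z})=\int f(\mathbf{s})e^{-i\mathbf{z}\cdot\mathbf{s}}d\mathbf{s}$, inverse $\mathcal{F}^{-1}f(\mathbf{s})=(2\pi)^{-q}\int f(\mathbf{z})e^{i\mathbf{s}\cdot\mathbf{z}}d\mathbf{z}$ on $\mathbb{R}^q$; subscripts indicate the variable transformed. $\mathcal{S}(\mathbb{R}^d)$ is the Schwartz space, $\mathcal{S}_e$ its subspace of even functions. Assumption (A): $F:\mathbb{R}^d\times\mathbb{R}\to\mathbb{R}$ is continuous in $\mathbf{x}$ for each $k$ and in $k$ for each $\mathbf{x}$, and $\int\int|F(\mathbf{x},k)h(\mathbf{x})|dk\,d\mathbf{x}<\infty$ for all $h\in\mathcal{S}(\mathbb{R}^d)$. $F$ is of class AHa if $F(\lambda\mathbf{x},\lambda k)=|\lambda|F(\mathbf{x},k)$ for $\lambda\ne0$ and $F(\mathbf{x},k)=F(\mathbf{x},-k)=F(-\mathbf{x},k)$. $T^F$ is the linear form on $\mathcal{S}_e$: $T^F(\varphi)=-\frac12\int_{\mathbb{R}^d}\mathcal{F}^{-1}\varphi(\mathbf{x})\big(\int_{\mathbb{R}}F(\mathbf{x},k)e^{-ik}dk\big)d\mathbf{x}$; for $F$ of class AHa it is the unique solution $T$ of the spanning problem (find $T$ on $\mathcal{S}_e$ such that $N(\varphi-\varphi(\mathbf0)):=T(\varphi)$ satisfies $\int\int F\theta_0=N(\mathbf{w}\mapsto\int\int(|\mathbf{w}\cdot\mathbf{x}|-|k|)^+\theta_0\,dk\,d\mathbf{x})$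 for all $\theta_0(\mathbf{x},k)=e^{-irk}h(\mathbf{x})$, $r\ne0$, $h\in\mathcal{S}(\mathbb{R}^d)$). Radon transform: for $g\in L^1(\mathbb{R}^d)$, $\mathcal{R}g(\mathbf{0},k)=0$ and for $\mathbf{x}\ne\mathbf0$, $\mathcal{R}g(\mathbf{x},k)=\frac{1}{|x_j|}\int_{\mathbb{R}^{d-1}}g\big(y_1,\dots,y_{j-1},\frac{k-\sum_{i\ne j}x_iy_i}{x_j},y_{j+1},\dots,y_d\big)\prod_{i\neq j}dy_i$ for any $j$ with $x_j\ne0$ (independent of this choice). *)

theory Defs
  imports "HOL-Analysis.Analysis"
begin

text \<open>Euclidean space R^d is rendered as real^'n with d = CARD('n) (so d \<ge> 1 automatically).
  Schwartz functions are complex-valued.\<close>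

definition axis_pderiv :: "'n::finite \<Rightarrow> (real^'n \<Rightarrow> complex) \<Rightarrow> real^'n \<Rightarrow> complex" where
  "axis_pderiv i f x = vector_derivative (\<lambda>t. f (x + t *\<^sub>R axis i 1)) (at 0)"

fun iter_pderiv :: "'n::finite list \<Rightarrow> (real^'n \<Rightarrow> complex) \<Rightarrow> real^'n \<Rightarrow> complex" where
  "iter_pderiv [] f = f"
| "iter_pderiv (i # is) f = axis_pderiv i (iter_pderiv is f)"

definition schwartz :: "(real^'n::finite \<Rightarrow> complex) set" where
  "schwartz = {f. \<forall>is. continuous_on UNIV (iter_pderiv is f)
      \<and> (\<forall>i x. (\<lambda>t. iter_pderiv is f (x + t *\<^sub>R axis i 1)) differentiable (at 0))
      \<and> (\<forall>N::nat. bounded (range (\<lambda>x. (1 + norm x) ^ N *\<^sub>R iter_pderiv is f x)))}"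

definition schwartz_even :: "(real^'n::finite \<Rightarrow> complex) set" where
  "schwartz_even = {f \<in> schwartz. \<forall>x. f (- x) = f x}"

definition fourier1 :: "(real \<Rightarrow> complex) \<Rightarrow> real \<Rightarrow> complex" where
  "fourier1 g z = (\<integral>s. g s * exp (- \<i> * complex_of_real (z * s)) \<partial>lborel)"

definition fourier_inv :: "(real^'n::finite \<Rightarrow> complex) \<Rightarrow> real^'n \<Rightarrow> complex" where
  "fourier_inv G s = complex_of_real (inverse ((2 * pi) ^ CARD('n)))
      * (\<integral>z. G z * exp (\<i> * complex_of_real (s \<bullet> z)) \<partial>lborel)"

definition assumptionA :: "(real^'n::finite \<Rightarrow> real \<Rightarrow> real) \<Rightarrow> bool" where
  "assumptionA F \<longleftrightarrow> (\<forall>k. continuous_on UNIV (\<lambda>x. F x k))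
     \<and> (\<forall>x. continuous_on UNIV (F x))
     \<and> (\<forall>h\<in>schwartz. (\<integral>\<^sup>+ x. (\<integral>\<^sup>+ k. ennreal (norm (complex_of_real (F x k) * h x)) \<partial>lborel) \<partial>lborel) < \<infinity>)"

definition classAHa :: "(real^'n::finite \<Rightarrow> real \<Rightarrow> real) \<Rightarrow> bool" where
  "classAHa F \<longleftrightarrow> (\<forall>c x k. c \<noteq> 0 \<longrightarrow> F (c *\<^sub>R x) (c * k) = \<bar>c\<bar> * F x k)
     \<and> (\<forall>x k. F x k = F x (- k) \<and> F x k = F (- x) k)"

definition T_F :: "(real^'n::finite \<Rightarrow> real \<Rightarrow> real) \<Rightarrow> (real^'n \<Rightarrow> complex) \<Rightarrow> complex" where
  "T_F F \<phi> = - (1/2) * (\<integral>x. fourier_inv \<phi> x * fourier1 (\<lambda>k. complex_of_real (F x k)) 1 \<partial>lborel)"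

text \<open>Radon transform; the integral over R^(d-1) is over the coordinates i \<noteq> j.\<close>
definition radon :: "(real^'n::finite \<Rightarrow> complex) \<Rightarrow> real^'n \<Rightarrow> real \<Rightarrow> complex" where
  "radon g x k = (if x = 0 then 0 else
     (let j = (SOME j. x $ j \<noteq> 0) in
       complex_of_real (1 / \<bar>x $ j\<bar>) *
       (\<integral>u. g (\<chi> i. if i = j then (k - (\<Sum>l\<in>UNIV - {j}. x $ l * u l)) / x $ j else u i)
          \<partial>(\<Pi>\<^sub>M i\<in>UNIV - {j}. lborel))))"

definition Cn :: "nat \<Rightarrow> (real \<Rightarrow> real) \<Rightarrow> bool" where
  "Cn n g \<longleftrightarrow> (\<forall>j<n. \<forall>k. ((deriv ^^ j) g has_real_derivative (deriv ^^ Suc j) g k) (at k))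
      \<and> continuous_on UNIV ((deriv ^^ n) g)"

end

theory Submission
  imports Defs "HOL-Probability.Probability"
begin

text \<open>
  Part (i) is Fubini: the inverse Fourier transform moves from \<open>\<phi>\<close> onto the integrable
  function \<open>x \<mapsto> F\<^sub>k[F(x,k)](1)\<close>. For (ii), integration by parts in \<open>k\<close> multiplies the
  Fourier transform at frequency 1 by \<open>\<i>\<close> for every derivative, and \<open>(-\<i>)\<^sup>n \<i>\<^sup>n = 1\<close>.
  For (iii), the Fourier slice theorem says that the Fourier transform of \<open>k \<mapsto> R g(x,k)\<close>
  at frequency 1 is \<open>\<hat>g(x)\<close>; with (ii) for \<open>n = 2\<close> this gives \<open>F\<^sub>k[F(x,k)](1) = -2 \<hat>g(x)\<close>
  for \<open>x \<noteq> 0\<close>, so \<open>f\<close> is the inverse Fourier transform of \<open>\<hat>g\<close> and equals \<open>g\<close> a.e.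
  by Fourier inversion.

  Fourier inversion is proved by Gaussian summability: \<open>u = F\<^sup>-\<^sup>1 \<hat>g\<close> and \<open>g\<close> have the same
  convolution with every Gaussian. As a product of two Gaussians is again a Gaussian, the
  integrable function \<open>(g - u) G\<^sub>1\<close> has vanishing convolutions with all Gaussians; Gaussian
  smoothings of the indicator of a box converge to it, so all box integrals of \<open>(g - u) G\<^sub>1\<close>
  vanish and \<open>g = u\<close> almost everywhere.
\<close>

section \<open>Fourier transforms of derivatives\<close>

lemma integrable_exists_small_right:
  fixes P :: "real \<Rightarrow> 'a::{banach,second_countable_topology}"
  assumes P: "integrable lborel P" and e: "e > 0"
  shows "\<exists>b\<ge>B. norm (P b) < e"
proof (rule ccontr)
  assume "\<not> ?thesis"
  hence ge: "\<And>b. b \<ge> B \<Longrightarrow> e \<le> norm (P b)" by force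
  have "e * real n \<le> (\<integral>x. norm (P x) \<partial>lborel)" for n :: nat
  proof -
    have "e * real n = (\<integral>x. indicator {B..B + real n} x * e \<partial>lborel)"
      by simp
    also have "\<dots> \<le> (\<integral>x. norm (P x) \<partial>lborel)"
    proof (rule integral_mono)
      show "integrable lborel (\<lambda>x. indicator {B..B + real n} x * e)"
        by (simp add: integrable_real_mult_indicator)
    qed (use ge e P in \<open>auto simp: indicator_def\<close>)
    finally show ?thesis .
  qed
  moreover obtain n :: nat where "(\<integral>x. norm (P x) \<partial>lborel) / e < real n"
    using reals_Archimedean2 by blast
  ultimately show False
    using e by (metis mult.commute not_less pos_divide_less_eq)
qed

lemma integrable_exists_small_left:
  fixes P :: "real \<Rightarrow> 'a::{banach,second_countable_topology}"
  assumes P: "integrable lborel P" and "e > 0"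
  shows "\<exists>a\<le>B. norm (P a) < e"
proof -
  have "integrable lborel (\<lambda>x. P (- x))"
    using lborel_integrable_real_affine[OF P, of "-1" 0] by simp
  from integrable_exists_small_right[OF this \<open>e > 0\<close>, of "- B"] show ?thesis
    by (metis minus_le_iff)
qed

lemma integral_derivative_eq_0:
  fixes P q :: "real \<Rightarrow> complex"
  assumes der: "\<And>x. (P has_vector_derivative q x) (at x)"
    and P: "integrable lborel P" and q: "integrable lborel q"
  shows "integral\<^sup>L lborel q = 0"
proof -
  have "\<forall>n::nat. \<exists>b. b \<ge> real n \<and> norm (P b) < 1 / (real n + 1)"
    using integrable_exists_small_right[OF P] by simp
  then obtain b where b: "\<And>n. b n \<ge> real n" "\<And>n. norm (P (b n)) < 1 / (real n + 1)"
    by metis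
  have "\<forall>n::nat. \<exists>a. a \<le> - real n \<and> norm (P a) < 1 / (real n + 1)"
    using integrable_exists_small_left[OF P] by simp
  then obtain a where a: "\<And>n. a n \<le> - real n" "\<And>n. norm (P (a n)) < 1 / (real n + 1)"
    by metis
  have ab: "a n \<le> b n" for n using a(1)[of n] b(1)[of n] by simp
  have [measurable]: "q \<in> borel_measurable borel" using q by auto
  have FTC: "(\<integral>x. indicator {a n..b n} x *\<^sub>R q x \<partial>lborel) = P (b n) - P (a n)" for n
  proof -
    have "(q has_integral P (b n) - P (a n)) {a n..b n}"
      by (rule fundamental_theorem_of_calculus[OF ab])
         (auto intro: has_vector_derivative_at_within der)
    moreover have "set_integrable lborel {a n..b n} q"
      by (simp add: q set_integrable_def integrable_mult_indicator)
    ultimately show ?thesis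
      using set_borel_integral_eq_integral(2)
      by (metis integral_unique set_lebesgue_integral_def)
  qed
  have lim1: "(\<lambda>n. \<integral>x. indicator {a n..b n} x *\<^sub>R q x \<partial>lborel) \<longlonglongrightarrow> integral\<^sup>L lborel q"
  proof (rule integral_dominated_convergence[where w="\<lambda>x. norm (q x)"])
    show "integrable lborel (\<lambda>x. norm (q x))" using q by auto
    show "AE x in lborel. (\<lambda>n. indicator {a n..b n} x *\<^sub>R q x) \<longlonglongrightarrow> q x"
    proof (rule AE_I2)
      fix x
      obtain N :: nat where N: "real N \<ge> \<bar>x\<bar>" using real_arch_simple by blast
      have "\<forall>n\<ge>N. indicator {a n..b n} x *\<^sub>R q x = q x"
      proof safe
        fix n assume "n \<ge> N"
        hence "real n \<ge> real N" by simp
        hence "real n \<ge> \<bar>x\<bar>" using N by linarith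
        hence "x \<in> {a n..b n}" using a(1)[of n] b(1)[of n] by auto
        thus "indicator {a n..b n} x *\<^sub>R q x = q x" by simp
      qed
      thus "(\<lambda>n. indicator {a n..b n} x *\<^sub>R q x) \<longlonglongrightarrow> q x"
        by (intro tendsto_eventually) (auto simp: eventually_sequentially)
    qed
  qed (auto simp: indicator_def)
  have lim2: "(\<lambda>n. P (b n) - P (a n)) \<longlonglongrightarrow> 0"
  proof -
    have z: "(\<lambda>n. 1 / (real n + 1)) \<longlonglongrightarrow> 0"
      using LIMSEQ_inverse_real_of_nat by (simp add: inverse_eq_divide add.commute)
    have "(\<lambda>n. P (b n)) \<longlonglongrightarrow> 0"
      by (rule Lim_null_comparison[OF _ z]) (use b(2) less_imp_le in \<open>auto intro!: always_eventually\<close>)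
    moreover have "(\<lambda>n. P (a n)) \<longlonglongrightarrow> 0"
      by (rule Lim_null_comparison[OF _ z]) (use a(2) less_imp_le in \<open>auto intro!: always_eventually\<close>)
    ultimately show ?thesis using tendsto_diff by fastforce
  qed
  show ?thesis using lim1 lim2 FTC LIMSEQ_unique by auto
qed

lemma fourier1_deriv:
  fixes h h' :: "real \<Rightarrow> complex"
  assumes der: "\<And>k. (h has_vector_derivative h' k) (at k)"
    and h: "integrable lborel h" and h': "integrable lborel h'"
  shows "fourier1 h' z = \<i> * complex_of_real z * fourier1 h z"
proof -
  define e where "e s = exp (- \<i> * complex_of_real (z * s))" for s
  have norm_e: "norm (e s) = 1" for s by (simp add: e_def norm_exp_eq_Re)
  have [measurable]: "h \<in> borel_measurable borel" "h' \<in> borel_measurable borel"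
    using h h' by auto
  have he: "integrable lborel (\<lambda>s. h s * e s)"
    by (rule Bochner_Integration.integrable_bound[OF h]) (simp_all add: norm_mult norm_e e_def)
  have h'e: "integrable lborel (\<lambda>s. h' s * e s)"
    by (rule Bochner_Integration.integrable_bound[OF h']) (simp_all add: norm_mult norm_e e_def)
  have e_der: "(e has_vector_derivative - \<i> * complex_of_real z * e k) (at k)" for k
  proof -
    have "((iexp \<circ> (\<lambda>s. - z * s)) has_vector_derivative (- z) *\<^sub>R (\<i> * iexp (- z * k))) (at k)"
      by (rule vector_diff_chain_within) (auto intro!: derivative_eq_intros has_vector_derivative_iexp)
    moreover have "iexp \<circ> (\<lambda>s. - z * s) = e"
      by (auto simp: e_def)
    ultimately show ?thesis
      by (simp add: e_def scaleR_conv_of_real mult_ac)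
  qed
  then have "((\<lambda>s. h s * e s) has_vector_derivative h' k * e k - \<i> * complex_of_real z * (h k * e k)) (at k)" for k
    using has_vector_derivative_mult[OF der e_der] by (simp add: algebra_simps)
  from integral_derivative_eq_0[OF this he] have
    "(\<integral>s. h' s * e s - \<i> * complex_of_real z * (h s * e s) \<partial>lborel) = 0"
    using he h'e by auto
  then show ?thesis
    using he h'e by (simp add: fourier1_def e_def mult.commute)
qed

lemma fourier1_cmult: "fourier1 (\<lambda>k. c * h k) z = c * fourier1 h z"
  unfolding fourier1_def by (simp add: mult.assoc)

lemma fourier1_higher_deriv:
  fixes g :: "real \<Rightarrow> real"
  assumes C: "Cn n g" and I: "\<And>j. j \<le> n \<Longrightarrow> integrable lborel ((deriv ^^ j) g)"
  shows "j \<le> n \<Longrightarrow> fourier1 (\<lambda>k. complex_of_real ((deriv ^^ j) g k)) z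
           = (\<i> * complex_of_real z) ^ j * fourier1 (\<lambda>k. complex_of_real (g k)) z"
proof (induction j)
  case (Suc j)
  have "((\<lambda>k. complex_of_real ((deriv ^^ j) g k)) has_vector_derivative
          complex_of_real ((deriv ^^ Suc j) g k)) (at k)" for k
    using C Suc.prems unfolding Cn_def by (auto intro!: has_vector_derivative_of_real)
  then have "fourier1 (\<lambda>k. complex_of_real ((deriv ^^ Suc j) g k)) z
      = \<i> * complex_of_real z * fourier1 (\<lambda>k. complex_of_real ((deriv ^^ j) g k)) z"
    using Suc.prems by (intro fourier1_deriv integrable_of_real I) simp_all
  then show ?case
    using Suc by simp
qed simp

lemma fourier1_neg_i_pow_higher_deriv:
  fixes g :: "real \<Rightarrow> real"
  assumes "Cn n g" and "\<And>j. j \<le> n \<Longrightarrow> integrable lborel ((deriv ^^ j) g)"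
  shows "fourier1 (\<lambda>k. (- \<i>) ^ n * complex_of_real ((deriv ^^ n) g k)) 1
       = fourier1 (\<lambda>k. complex_of_real (g k)) 1"
proof -
  have "(- \<i>) ^ n * \<i> ^ n = (1::complex)"
    by (simp flip: power_mult_distrib)
  then show ?thesis
    by (simp add: fourier1_cmult fourier1_higher_deriv[OF assms] mult.assoc[symmetric])
qed

section \<open>Integrals over Euclidean space\<close>

lemma sum_basis_inner: "b \<in> Basis \<Longrightarrow> (\<Sum>c\<in>Basis. f c *\<^sub>R c) \<bullet> (b::'a::euclidean_space) = f b"
  by (simp add: inner_sum_left inner_Basis if_distrib sum.delta cong: if_cong)

lemma lborel_prod_Basis:
  fixes f :: "'a::euclidean_space \<Rightarrow> real \<Rightarrow> 'c::{real_normed_field,banach,second_countable_topology}"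
  assumes int: "\<And>b. b \<in> Basis \<Longrightarrow> integrable lborel (f b)"
  shows "integrable lborel (\<lambda>v::'a. \<Prod>b\<in>Basis. f b (v \<bullet> b))"
    and "(\<integral>v. (\<Prod>b\<in>Basis. f b (v \<bullet> b)) \<partial>(lborel::'a measure)) = (\<Prod>b\<in>Basis. \<integral>t. f b t \<partial>lborel)"
proof -
  interpret product_sigma_finite "\<lambda>_::'a. lborel :: real measure" by standard
  have m[measurable]: "\<And>b. b \<in> Basis \<Longrightarrow> f b \<in> borel_measurable borel"
    using int by auto
  have mp: "(\<lambda>v::'a. \<Prod>b\<in>Basis. f b (v \<bullet> b)) \<in> borel_measurable borel"
    by (rule borel_measurable_prod) auto
  have eq: "(\<lambda>x. (\<lambda>v::'a. \<Prod>b\<in>Basis. f b (v \<bullet> b)) (\<Sum>c\<in>Basis. x c *\<^sub>R c)) = (\<lambda>x. \<Prod>b\<in>Basis. f b (x b))"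
    by (intro ext prod.cong refl) (simp add: sum_basis_inner)
  have T: "(\<lambda>x. \<Sum>c\<in>(Basis::'a set). x c *\<^sub>R c) \<in> measurable (\<Pi>\<^sub>M b\<in>Basis. lborel) borel"
    by measurable
  have ip: "integrable (\<Pi>\<^sub>M b\<in>Basis. lborel) (\<lambda>x. \<Prod>b\<in>(Basis::'a set). f b (x b))"
    by (rule product_integrable_prod) (auto intro: int)
  show "integrable lborel (\<lambda>v::'a. \<Prod>b\<in>Basis. f b (v \<bullet> b))"
    apply (subst lborel_eq)
    apply (subst integrable_distr_eq[OF T mp])
    using ip eq by simp
  show "(\<integral>v. (\<Prod>b\<in>Basis. f b (v \<bullet> b)) \<partial>(lborel::'a measure)) = (\<Prod>b\<in>Basis. \<integral>t. f b t \<partial>lborel)"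
    apply (subst lborel_eq)
    apply (subst integral_distr[OF T mp])
    using product_integral_prod[of Basis f] int eq by simp
qed

lemma prod_Basis_one_plus_square_le:
  fixes x :: "'a::euclidean_space"
  shows "(\<Prod>b\<in>Basis. (1 + (x \<bullet> b)^2)) \<le> (1 + norm x) ^ (2 * DIM('a))"
proof -
  have "(\<Prod>b\<in>Basis. (1 + (x \<bullet> b)^2)) \<le> (\<Prod>b\<in>(Basis::'a set). (1 + norm x)^2)"
  proof (rule prod_mono)
    fix b :: 'a assume b: "b \<in> Basis"
    have "\<bar>x \<bullet> b\<bar> \<le> norm x" using Basis_le_norm[OF b] .
    hence "(x \<bullet> b)^2 \<le> (norm x)^2"
      by (metis abs_le_square_iff abs_norm_cancel)
    moreover have "(1 + norm x)^2 = 1 + 2 * norm x + (norm x)^2" by (simp add: power2_eq_square algebra_simps)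
    ultimately show "0 \<le> 1 + (x \<bullet> b)^2 \<and> 1 + (x \<bullet> b)^2 \<le> (1 + norm x)^2"
      using norm_ge_zero[of x] by (smt (verit) zero_le_power2)
  qed
  also have "\<dots> = (1 + norm x) ^ (2 * DIM('a))"
    by (simp add: power_mult)
  finally show ?thesis .
qed

lemma integrable_poly_decay:
  fixes \<phi> :: "'a::euclidean_space \<Rightarrow> 'b::{banach,second_countable_topology}"
  assumes m: "\<phi> \<in> borel_measurable borel"
    and C: "\<And>x. (1 + norm x) ^ (2 * DIM('a)) * norm (\<phi> x) \<le> C"
  shows "integrable lborel \<phi>"
proof (rule Bochner_Integration.integrable_bound[where f="\<lambda>x::'a. C * (\<Prod>b\<in>Basis. inverse (1 + (x \<bullet> b)^2))"])
  show "integrable lborel (\<lambda>x::'a. C * (\<Prod>b\<in>Basis. inverse (1 + (x \<bullet> b)^2)))"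
    using lborel_prod_Basis(1)[of "\<lambda>(_::'a) t. inverse (1 + t^2) :: real"] integrable_inverse_1_plus_square
    by (simp add: set_integrable_def)
  show "AE x in lborel. norm (\<phi> x) \<le> norm (C * (\<Prod>b\<in>Basis. inverse (1 + (x \<bullet> b)^2)))"
  proof (rule AE_I2)
    fix x :: 'a
    let ?P = "\<Prod>b\<in>(Basis::'a set). 1 + (x \<bullet> b)^2"
    have P: "?P > 0"
      by (intro prod_pos) (simp add: add_pos_nonneg)
    have "?P * norm (\<phi> x) \<le> C"
      using mult_right_mono[OF prod_Basis_one_plus_square_le norm_ge_zero] C order_trans by blast
    then have "norm (\<phi> x) \<le> C * inverse ?P"
      using P by (simp add: field_simps)
    moreover have "C \<ge> 0"
      using C[of x] by (smt (verit) norm_ge_zero zero_le_mult_iff zero_le_power)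
    moreover have "(\<Prod>b\<in>Basis. inverse (1 + (x \<bullet> b)^2)) = inverse ?P"
      using prod_inversef[of "\<lambda>b. 1 + (x \<bullet> b)^2" Basis] by (simp add: o_def)
    ultimately show "norm (\<phi> x) \<le> norm (C * (\<Prod>b\<in>Basis. inverse (1 + (x \<bullet> b)^2)))"
      using P by simp
  qed
qed (use m in simp)

lemma schwartz_integrable:
  assumes "\<phi> \<in> schwartz"
  shows "integrable lborel (\<phi> :: real^'n::finite \<Rightarrow> complex)"
proof -
  have c: "continuous_on UNIV \<phi>" and b: "\<And>N. bounded (range (\<lambda>x. (1 + norm x) ^ N *\<^sub>R \<phi> x))"
    using assms unfolding schwartz_def by (auto dest: spec[of _ "[]"])
  obtain C where C: "\<And>x. norm ((1 + norm x) ^ (2 * DIM(real^'n)) *\<^sub>R \<phi> x) \<le> C"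
    using b[of "2 * DIM(real^'n)"] unfolding bounded_iff by blast
  show ?thesis
  proof (rule integrable_poly_decay)
    show "\<phi> \<in> borel_measurable borel" using c by (rule borel_measurable_continuous_onI)
    fix x :: "real^'n"
    show "(1 + norm x) ^ (2 * DIM(real^'n)) * norm (\<phi> x) \<le> C"
      using C[of x] by simp
  qed
qed

lemma Fubini_unimodular_kernel:
  fixes f :: "'a::euclidean_space \<Rightarrow> complex" and g :: "'b::euclidean_space \<Rightarrow> complex"
    and e :: "'a \<Rightarrow> 'b \<Rightarrow> complex"
  assumes f: "integrable lborel f" and g: "integrable lborel g"
    and e_meas: "(\<lambda>(x,y). e x y) \<in> borel_measurable (lborel \<Otimes>\<^sub>M lborel)"
    and e_norm: "\<And>x y. norm (e x y) = 1"
  shows "(\<integral>x. (\<integral>y. f x * g y * e x y \<partial>lborel) \<partial>lborel) = (\<integral>y. (\<integral>x. f x * g y * e x y \<partial>lborel) \<partial>lborel)"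
proof -
  have [measurable]: "f \<in> borel_measurable borel" "g \<in> borel_measurable borel"
    using f g by auto
  have m: "(\<lambda>(x,y). f x * g y * e x y) \<in> borel_measurable (lborel \<Otimes>\<^sub>M lborel)"
  proof -
    have "(\<lambda>p. f (fst p) * g (snd p) * (\<lambda>(x,y). e x y) p) \<in> borel_measurable (lborel \<Otimes>\<^sub>M lborel)"
      using e_meas by measurable
    then show ?thesis by (simp add: case_prod_beta')
  qed
  have "integrable (lborel \<Otimes>\<^sub>M lborel) (\<lambda>(x,y). f x * g y * e x y)"
  proof (rule lborel_pair.Fubini_integrable[OF m])
    have "(\<lambda>x. \<integral>y. norm (case (x, y) of (x, y) \<Rightarrow> f x * g y * e x y) \<partial>lborel)
        = (\<lambda>x. norm (f x) * (\<integral>y. norm (g y) \<partial>lborel))"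
      by (simp add: norm_mult e_norm)
    then show "integrable lborel (\<lambda>x. \<integral>y. norm (case (x, y) of (x, y) \<Rightarrow> f x * g y * e x y) \<partial>lborel)"
      using f by simp
    show "AE x in lborel. integrable lborel (\<lambda>y. case (x, y) of (x, y) \<Rightarrow> f x * g y * e x y)"
    proof (rule AE_I2)
      fix x
      have "(\<lambda>y. (\<lambda>(x,y). e x y) (x, y)) \<in> borel_measurable lborel"
        using measurable_Pair2[OF e_meas] by simp
      then have [measurable]: "(\<lambda>y. e x y) \<in> borel_measurable lborel" by simp
      show "integrable lborel (\<lambda>y. case (x, y) of (x, y) \<Rightarrow> f x * g y * e x y)"
        by (rule Bochner_Integration.integrable_bound[where f="\<lambda>y. norm (f x) * norm (g y)"])
           (auto simp: g norm_mult e_norm)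
    qed
  qed
  from lborel_pair.Fubini_integral[OF this] show ?thesis
    by simp
qed

lemma fourier_inv_multiplication_formula:
  fixes G \<phi> :: "real^'n::finite \<Rightarrow> complex"
  assumes G: "integrable lborel G" and \<phi>: "integrable lborel \<phi>"
  shows "(\<integral>x. fourier_inv \<phi> x * G x \<partial>lborel) = (\<integral>w. \<phi> w * fourier_inv G w \<partial>lborel)"
proof -
  let ?c = "complex_of_real (inverse ((2 * pi) ^ CARD('n)))"
  let ?e = "\<lambda>(x::real^'n) (z::real^'n). iexp (x \<bullet> z)"
  have e_meas: "(\<lambda>(x,y). ?e x y) \<in> borel_measurable (lborel \<Otimes>\<^sub>M lborel)"
    by measurable
  have e_norm: "\<And>x y. norm (?e x y) = 1"
    by (simp add: norm_exp_eq_Re)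
  have "(\<integral>x. fourier_inv \<phi> x * G x \<partial>lborel) = (\<integral>x. ?c * (G x * (\<integral>z. \<phi> z * ?e x z \<partial>lborel)) \<partial>lborel)"
    unfolding fourier_inv_def by (simp only: mult_ac)
  also have "\<dots> = ?c * (\<integral>x. (\<integral>z. G x * \<phi> z * ?e x z \<partial>lborel) \<partial>lborel)"
    by (simp only: integral_mult_right_zero mult.assoc)
  also have "\<dots> = ?c * (\<integral>w. (\<integral>x. G x * \<phi> w * ?e x w \<partial>lborel) \<partial>lborel)"
    by (simp only: Fubini_unimodular_kernel[OF G \<phi> e_meas e_norm])
  also have "\<dots> = ?c * (\<integral>w. \<phi> w * (\<integral>x. G x * ?e w x \<partial>lborel) \<partial>lborel)"
  proof -
    have "(\<integral>x. G x * \<phi> w * ?e x w \<partial>lborel) = (\<integral>x. \<phi> w * (G x * ?e w x) \<partial>lborel)" for w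
      by (simp add: inner_commute mult_ac)
    then show ?thesis
      by (simp only: integral_mult_right_zero)
  qed
  also have "\<dots> = (\<integral>w. ?c * (\<phi> w * (\<integral>x. G x * ?e w x \<partial>lborel)) \<partial>lborel)"
    by (simp only: integral_mult_right_zero)
  also have "\<dots> = (\<integral>w. \<phi> w * fourier_inv G w \<partial>lborel)"
    unfolding fourier_inv_def by (simp only: mult_ac)
  finally show ?thesis .
qed

lemma T_F_eq_integral:
  assumes "integrable lborel (\<lambda>x. fourier1 (\<lambda>k. complex_of_real (F x k)) 1)" and "\<phi> \<in> schwartz"
  shows "T_F F \<phi> = (\<integral>w. \<phi> w * (- (1/2) * fourier_inv (\<lambda>x. fourier1 (\<lambda>k. complex_of_real (F x k)) 1) w) \<partial>lborel)"
  unfolding T_F_def fourier_inv_multiplication_formula[OF assms(1) schwartz_integrable[OF assms(2)]]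
  by (simp add: mult.left_commute)

section \<open>Gaussian kernels\<close>

lemma normal_density_scale:
  assumes s: "\<sigma> > 0"
  shows "normal_density 0 \<sigma> (\<sigma> * x) = std_normal_density x / \<sigma>"
proof -
  have "sqrt (2 * pi * \<sigma>\<^sup>2) = \<sigma> * sqrt (2 * pi)"
    using s by (simp add: real_sqrt_mult mult.commute)
  moreover have "(\<sigma> * x)\<^sup>2 / (2 * \<sigma>\<^sup>2) = x\<^sup>2 / 2"
    using s by (simp add: power_mult_distrib)
  ultimately show ?thesis
    unfolding normal_density_def using s by (simp add: field_simps)
qed

lemma integral_normal_density_iexp:
  assumes s: "\<sigma> > 0"
  shows "(\<integral>x. complex_of_real (normal_density 0 \<sigma> x) * exp (\<i> * complex_of_real (x * \<xi>)) \<partial>lborel)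
        = complex_of_real (exp (- (\<sigma> * \<xi>)\<^sup>2 / 2))"
proof -
  have "char std_normal_distribution (\<sigma> * \<xi>) = complex_of_real (exp (- (\<sigma> * \<xi>)\<^sup>2 / 2))"
    by (simp add: char_std_normal_distribution)
  moreover have "char std_normal_distribution (\<sigma> * \<xi>)
     = (\<integral>x. std_normal_density x *\<^sub>R iexp (\<sigma> * \<xi> * x) \<partial>lborel)"
    unfolding char_def by (subst integral_density) auto
  moreover have "(\<integral>x. complex_of_real (normal_density 0 \<sigma> x) * exp (\<i> * complex_of_real (x * \<xi>)) \<partial>lborel)
     = \<bar>\<sigma>\<bar> *\<^sub>R (\<integral>x. complex_of_real (normal_density 0 \<sigma> (0 + \<sigma> * x)) * exp (\<i> * complex_of_real ((0 + \<sigma> * x) * \<xi>)) \<partial>lborel)"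
    by (rule lborel_integral_real_affine) (use s in simp)
  moreover have "\<bar>\<sigma>\<bar> *\<^sub>R (\<integral>x. complex_of_real (normal_density 0 \<sigma> (0 + \<sigma> * x)) * exp (\<i> * complex_of_real ((0 + \<sigma> * x) * \<xi>)) \<partial>lborel)
     = (\<integral>x. std_normal_density x *\<^sub>R iexp (\<sigma> * \<xi> * x) \<partial>lborel)"
  proof -
    have "\<And>x. \<sigma> *\<^sub>R (complex_of_real (normal_density 0 \<sigma> (\<sigma> * x)) * exp (\<i> * complex_of_real (\<sigma> * x * \<xi>)))
        = std_normal_density x *\<^sub>R iexp (\<sigma> * \<xi> * x)"
    proof -
      fix x
      have "\<sigma> * normal_density 0 \<sigma> (\<sigma> * x) = std_normal_density x"
        using s by (simp add: normal_density_scale)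
      hence "complex_of_real \<sigma> * complex_of_real (normal_density 0 \<sigma> (\<sigma> * x)) = complex_of_real (std_normal_density x)"
        by (metis of_real_mult)
      thus "?thesis x" by (simp add: scaleR_conv_of_real mult_ac)
    qed
    thus ?thesis using s by (simp del: of_real_mult add: integral_scaleR_right[symmetric])
  qed
  ultimately show ?thesis by simp
qed

definition gauss_kernel :: "real \<Rightarrow> 'a::euclidean_space \<Rightarrow> real" where
  "gauss_kernel \<sigma> v = (\<Prod>b\<in>Basis. normal_density 0 \<sigma> (v \<bullet> b))"

definition gauss_const :: "real \<Rightarrow> nat \<Rightarrow> real" where
  "gauss_const \<sigma> d = (1 / sqrt (2 * pi * \<sigma>\<^sup>2)) ^ d"

lemma inner_self_Basis: "v \<bullet> v = (\<Sum>b\<in>Basis. (v \<bullet> b)\<^sup>2)"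
  for v :: "'a::euclidean_space"
  by (simp add: euclidean_inner[of v v] power2_eq_square)

lemma gauss_kernel_iexp:
  assumes s: "\<sigma> > 0"
  shows "integrable lborel (\<lambda>v::'a::euclidean_space. complex_of_real (gauss_kernel \<sigma> v) * exp (\<i> * complex_of_real (v \<bullet> u)))"
    and "(\<integral>v. complex_of_real (gauss_kernel \<sigma> v) * exp (\<i> * complex_of_real (v \<bullet> u)) \<partial>(lborel::'a measure))
        = complex_of_real (exp (- \<sigma>\<^sup>2 * (u \<bullet> u) / 2))"
proof -
  let ?f = "\<lambda>b t. complex_of_real (normal_density 0 \<sigma> t) * exp (\<i> * complex_of_real (t * (u \<bullet> b)))"
  have int: "integrable lborel (?f b)" for b
    by (rule Bochner_Integration.integrable_bound[where f="normal_density 0 \<sigma>"])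
       (auto simp: norm_mult norm_exp_eq_Re integrable_normal_density[OF s])
  have eq: "complex_of_real (gauss_kernel \<sigma> v) * exp (\<i> * complex_of_real (v \<bullet> u)) = (\<Prod>b\<in>Basis. ?f b (v \<bullet> b))" for v :: 'a
  proof -
    have "v \<bullet> u = (\<Sum>b\<in>Basis. (v \<bullet> b) * (u \<bullet> b))" by (rule euclidean_inner)
    hence "exp (\<i> * complex_of_real (v \<bullet> u)) = (\<Prod>b\<in>Basis. exp (\<i> * complex_of_real ((v \<bullet> b) * (u \<bullet> b))))"
      by (simp add: sum_distrib_left exp_sum[symmetric])
    thus ?thesis unfolding gauss_kernel_def by (simp add: prod.distrib)
  qed
  show "integrable lborel (\<lambda>v::'a::euclidean_space. complex_of_real (gauss_kernel \<sigma> v) * exp (\<i> * complex_of_real (v \<bullet> u)))"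
    unfolding eq using lborel_prod_Basis(1)[of ?f] int by simp
  have "(\<integral>v. complex_of_real (gauss_kernel \<sigma> v) * exp (\<i> * complex_of_real (v \<bullet> u)) \<partial>(lborel::'a measure))
     = (\<Prod>b\<in>(Basis::'a set). \<integral>t. ?f b t \<partial>lborel)"
    unfolding eq using lborel_prod_Basis(2)[of ?f] int by simp
  also have "\<dots> = (\<Prod>b\<in>(Basis::'a set). complex_of_real (exp (- (\<sigma> * (u \<bullet> b))\<^sup>2 / 2)))"
    using integral_normal_density_iexp[OF s] by simp
  also have "\<dots> = complex_of_real (exp (- \<sigma>\<^sup>2 * (u \<bullet> u) / 2))"
    unfolding inner_self_Basis[of u]
    by (simp add: exp_sum[symmetric] sum_divide_distrib sum_distrib_left power_mult_distrib sum_negf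
           flip: of_real_prod)
  finally show "(\<integral>v. complex_of_real (gauss_kernel \<sigma> v) * exp (\<i> * complex_of_real (v \<bullet> u)) \<partial>(lborel::'a measure))
        = complex_of_real (exp (- \<sigma>\<^sup>2 * (u \<bullet> u) / 2))" .
qed

lemma gauss_kernel_eq_exp:
  assumes s: "\<sigma> > 0"
  shows "gauss_kernel \<sigma> (v::'a::euclidean_space) = gauss_const \<sigma> DIM('a) * exp (- (v \<bullet> v) / (2 * \<sigma>\<^sup>2))"
proof -
  have "gauss_kernel \<sigma> v = (\<Prod>b\<in>(Basis::'a set). 1 / sqrt (2 * pi * \<sigma>\<^sup>2) * exp (- (v \<bullet> b)\<^sup>2 / (2 * \<sigma>\<^sup>2)))"
    unfolding gauss_kernel_def normal_density_def by simp
  also have "\<dots> = (\<Prod>b\<in>(Basis::'a set). 1 / sqrt (2 * pi * \<sigma>\<^sup>2)) * (\<Prod>b\<in>(Basis::'a set). exp (- (v \<bullet> b)\<^sup>2 / (2 * \<sigma>\<^sup>2)))"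
    by (rule prod.distrib)
  also have "(\<Prod>b\<in>(Basis::'a set). exp (- (v \<bullet> b)\<^sup>2 / (2 * \<sigma>\<^sup>2))) = exp (\<Sum>b\<in>(Basis::'a set). - (v \<bullet> b)\<^sup>2 / (2 * \<sigma>\<^sup>2))"
    by (simp add: exp_sum)
  also have "(\<Sum>b\<in>(Basis::'a set). - (v \<bullet> b)\<^sup>2 / (2 * \<sigma>\<^sup>2)) = - (v \<bullet> v) / (2 * \<sigma>\<^sup>2)"
    unfolding inner_self_Basis[of v] by (simp add: sum_divide_distrib[symmetric] sum_negf)
  finally show ?thesis unfolding gauss_const_def by simp
qed

lemma gauss_kernel_nonneg: "gauss_kernel \<sigma> v \<ge> 0"
  unfolding gauss_kernel_def by (simp add: prod_nonneg)

lemma gauss_kernel_minus[simp]: "gauss_kernel \<sigma> (- v) = gauss_kernel \<sigma> v"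
  unfolding gauss_kernel_def normal_density_def by simp

lemma gauss_const_pos: "\<sigma> > 0 \<Longrightarrow> gauss_const \<sigma> d > 0" unfolding gauss_const_def by simp

lemma gauss_kernel_le:
  assumes s: "\<sigma> > 0"
  shows "gauss_kernel \<sigma> (v::'a::euclidean_space) \<le> gauss_const \<sigma> DIM('a)"
proof -
  have "exp (- (v \<bullet> v) / (2 * \<sigma>\<^sup>2)) \<le> 1" using s by (simp add: inner_ge_zero)
  thus ?thesis using gauss_kernel_eq_exp[OF s, of v] gauss_const_pos[OF s, of "DIM('a)"]
    by (metis mult.right_neutral mult_left_mono less_imp_le)
qed

lemma gauss_kernel_pos: "\<sigma> > 0 \<Longrightarrow> gauss_kernel \<sigma> v > 0"
  unfolding gauss_kernel_def by (intro prod_pos) (simp add: normal_density_pos)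

lemma gauss_kernel_measurable[measurable]: "gauss_kernel \<sigma> \<in> borel_measurable borel"
  unfolding gauss_kernel_def by measurable

lemma integrable_gauss_kernel:
  assumes s: "\<sigma> > 0"
  shows "integrable lborel (gauss_kernel \<sigma> :: 'a::euclidean_space \<Rightarrow> real)"
  unfolding gauss_kernel_def
  using lborel_prod_Basis(1)[of "\<lambda>_. normal_density 0 \<sigma>"] integrable_normal_density[OF s] by simp

lemma integral_gauss_kernel:
  assumes s: "\<sigma> > 0"
  shows "(\<integral>v. gauss_kernel \<sigma> v \<partial>(lborel :: 'a::euclidean_space measure)) = 1"
  unfolding gauss_kernel_def
  using lborel_prod_Basis(2)[of "\<lambda>_. normal_density 0 \<sigma>"] integrable_normal_density[OF s]
    integral_normal_density[OF s] by simp

lemma gauss_kernel_scale: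
  assumes t: "\<tau> > 0"
  shows "\<tau> ^ DIM('a) * gauss_kernel \<tau> (\<tau> *\<^sub>R z) = gauss_kernel 1 (z::'a::euclidean_space)"
proof -
  have "gauss_kernel \<tau> (\<tau> *\<^sub>R z) = (\<Prod>b\<in>(Basis::'a set). std_normal_density (z \<bullet> b) / \<tau>)"
    unfolding gauss_kernel_def by (intro prod.cong refl) (simp add: normal_density_scale[OF t])
  also have "\<dots> = gauss_kernel 1 z / \<tau> ^ DIM('a)"
    unfolding gauss_kernel_def by (simp add: prod_dividef)
  finally show ?thesis using t by simp
qed

text \<open>Completing the square in the exponent of a product of two Gaussians, with
  \<open>p = b \<bullet> b\<close>, \<open>q = b \<bullet> w\<close> and \<open>r = w \<bullet> w\<close>.\<close>

lemma gauss_exponent_identity: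
  fixes p q r T k :: real
  assumes T: "T > 0" and kd: "k = 1 + T"
  shows "- r / 2 - (p - 2 * q + r) / (2 * T)
       = - p / (2 * k) - (p / k\<^sup>2 - 2 * (q / k) + r) / (2 * (T / k))"
proof -
  have nz: "k \<noteq> 0" "T \<noteq> 0" using T kd by auto
  have "- r / 2 - (p - 2 * q + r) / (2 * T) - (- p / (2 * k) - (p / k\<^sup>2 - 2 * (q / k) + r) / (2 * (T / k)))
     = (p * (T + 1 - k) + r * (k - 1 - T) * k) / (2 * T * k)"
    using nz by (simp add: field_simps power2_eq_square)
  also have "\<dots> = 0" using kd by simp
  finally show ?thesis by simp
qed

lemma gauss_kernel_mult:
  assumes t: "\<tau> > 0"
  defines "k \<equiv> 1 + \<tau>\<^sup>2"
  defines "\<sigma> \<equiv> \<tau> / sqrt k"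
  shows "gauss_kernel 1 w * gauss_kernel \<tau> (b - w) =
     (gauss_const 1 DIM('a) * gauss_const \<tau> DIM('a) / gauss_const \<sigma> DIM('a) * exp (- (b \<bullet> b) / (2 * k))) * gauss_kernel \<sigma> ((1 / k) *\<^sub>R b - (w::'a::euclidean_space))"
proof -
  have k0: "k > 0" unfolding k_def by (simp add: add_pos_nonneg)
  have s0: "\<sigma> > 0" unfolding \<sigma>_def using t k0 by simp
  have s2: "\<sigma>\<^sup>2 = \<tau>\<^sup>2 / k" unfolding \<sigma>_def using k0 by (simp add: power_divide)
  let ?p = "b \<bullet> b" and ?q = "b \<bullet> w" and ?r = "w \<bullet> w"
  have Qbw: "((b - w) \<bullet> (b - w)) = ?p - 2 * ?q + ?r"
    by (simp add: inner_diff_left inner_diff_right inner_commute)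
  have Qaw: "(((1 / k) *\<^sub>R b - w) \<bullet> ((1 / k) *\<^sub>R b - w)) = ?p / k\<^sup>2 - 2 * (?q / k) + ?r"
    by (simp add: inner_diff_left inner_diff_right inner_commute power2_eq_square)
  have T: "\<tau>\<^sup>2 > 0" using t by simp
  have ex: "(- (w \<bullet> w) / (2 * 1\<^sup>2)) + (- ((b - w) \<bullet> (b - w)) / (2 * \<tau>\<^sup>2)) = (- (b \<bullet> b) / (2 * k)) + (- (((1 / k) *\<^sub>R b - w) \<bullet> ((1 / k) *\<^sub>R b - w)) / (2 * \<sigma>\<^sup>2))"
    unfolding Qbw Qaw s2 using gauss_exponent_identity[OF T k_def[THEN meta_eq_to_obj_eq], where p="?p" and q="?q" and r="?r"] k0 t by (simp add: field_simps)
  have N: "gauss_const \<sigma> DIM('a) > 0" by (rule gauss_const_pos[OF s0])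
  have "gauss_kernel 1 w * gauss_kernel \<tau> (b - w) = gauss_const 1 DIM('a) * gauss_const \<tau> DIM('a) * exp ((- (w \<bullet> w) / (2 * 1\<^sup>2)) + (- ((b - w) \<bullet> (b - w)) / (2 * \<tau>\<^sup>2)))"
    by (simp only: gauss_kernel_eq_exp[OF t] gauss_kernel_eq_exp[OF zero_less_one] exp_add mult_ac)
  also have "\<dots> = gauss_const 1 DIM('a) * gauss_const \<tau> DIM('a) * (exp (- (b \<bullet> b) / (2 * k)) * exp (- (((1 / k) *\<^sub>R b - w) \<bullet> ((1 / k) *\<^sub>R b - w)) / (2 * \<sigma>\<^sup>2)))"
    unfolding ex by (simp only: exp_add)
  also have "\<dots> = (gauss_const 1 DIM('a) * gauss_const \<tau> DIM('a) / gauss_const \<sigma> DIM('a) * exp (- (b \<bullet> b) / (2 * k))) * gauss_kernel \<sigma> ((1 / k) *\<^sub>R b - w)"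
    using N by (simp add: gauss_kernel_eq_exp[OF s0])
  finally show ?thesis .
qed

lemma exp_eq_gauss_kernel:
  assumes s: "\<sigma> > 0"
  shows "exp (- \<sigma>\<^sup>2 * ((\<xi>::'a::euclidean_space) \<bullet> (\<xi>::'a::euclidean_space)) / 2) = gauss_kernel (1/\<sigma>) \<xi> / gauss_const (1/\<sigma>) DIM('a)"
proof -
  have "gauss_kernel (1/\<sigma>) \<xi> = gauss_const (1/\<sigma>) DIM('a) * exp (- (\<xi> \<bullet> \<xi>) / (2 * (1/\<sigma>)\<^sup>2))"
    by (rule gauss_kernel_eq_exp) (use s in simp)
  moreover have "- (\<xi> \<bullet> \<xi>) / (2 * (1/\<sigma>)\<^sup>2) = - \<sigma>\<^sup>2 * (\<xi> \<bullet> \<xi>) / 2"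
    using s by (simp add: field_simps power2_eq_square)
  moreover have "gauss_const (1/\<sigma>) DIM('a) > 0" by (rule gauss_const_pos) (use s in simp)
  ultimately show ?thesis by simp
qed

lemma gauss_const_inverse:
  assumes s: "\<sigma> > 0"
  shows "inverse ((2 * pi) ^ d) / gauss_const (1/\<sigma>) d = gauss_const \<sigma> d"
proof -
  define r where "r = sqrt (2 * pi)"
  have r0: "r > 0" unfolding r_def by simp
  have rr: "2 * pi = r * r" unfolding r_def by simp
  have base: "inverse (2 * pi) * sqrt (2 * pi * (1/\<sigma>)\<^sup>2) = 1 / sqrt (2 * pi * \<sigma>\<^sup>2)"
  proof -
    have a: "sqrt (2 * pi * (1/\<sigma>)\<^sup>2) = r / \<sigma>"
      using s unfolding r_def by (simp add: real_sqrt_mult power_divide real_sqrt_divide)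
    have b: "sqrt (2 * pi * \<sigma>\<^sup>2) = r * \<sigma>"
      using s unfolding r_def by (simp add: real_sqrt_mult)
    show ?thesis unfolding a b using r0 s rr by (simp add: field_simps)
  qed
  have "inverse (a ^ d) / ((1 / b) ^ d) = (inverse a * b) ^ d" for a b :: real
    by (simp add: power_one_over power_mult_distrib divide_inverse power_inverse)
  then have "inverse ((2 * pi) ^ d) / gauss_const (1/\<sigma>) d = (inverse (2 * pi) * sqrt (2 * pi * (1/\<sigma>)\<^sup>2)) ^ d"
    unfolding gauss_const_def .
  also have "\<dots> = gauss_const \<sigma> d" unfolding gauss_const_def base ..
  finally show ?thesis .
qed

lemma fourier_inv_gauss:
  assumes s: "\<sigma> > 0"
  shows "integrable lborel (\<lambda>\<xi>::'a::euclidean_space. complex_of_real (exp (- \<sigma>\<^sup>2 * (\<xi> \<bullet> \<xi>) / 2)))"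
    and "complex_of_real (inverse ((2 * pi) ^ DIM('a))) *
          (\<integral>\<xi>. complex_of_real (exp (- \<sigma>\<^sup>2 * (\<xi> \<bullet> \<xi>) / 2)) * iexp (\<xi> \<bullet> v) \<partial>(lborel::'a measure))
        = complex_of_real (gauss_kernel \<sigma> v)"
proof -
  let ?N = "gauss_const (1/\<sigma>) DIM('a)"
  have s': "1/\<sigma> > 0" using s by simp
  have eq: "complex_of_real (exp (- \<sigma>\<^sup>2 * (\<xi> \<bullet> \<xi>) / 2)) = complex_of_real (inverse ?N) * complex_of_real (gauss_kernel (1/\<sigma>) \<xi>)" for \<xi> :: 'a
  proof -
    have r: "exp (- \<sigma>\<^sup>2 * (\<xi> \<bullet> \<xi>) / 2) = inverse ?N * gauss_kernel (1/\<sigma>) \<xi>"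
      unfolding exp_eq_gauss_kernel[OF s, of \<xi>] by (simp only: divide_inverse mult.commute)
    show ?thesis by (simp only: r of_real_mult)
  qed
  show "integrable lborel (\<lambda>\<xi>::'a::euclidean_space. complex_of_real (exp (- \<sigma>\<^sup>2 * (\<xi> \<bullet> \<xi>) / 2)))"
    unfolding eq by (intro integrable_mult_right integrable_of_real integrable_gauss_kernel s')
  have "(\<integral>\<xi>. complex_of_real (exp (- \<sigma>\<^sup>2 * (\<xi> \<bullet> \<xi>) / 2)) * iexp (\<xi> \<bullet> v) \<partial>(lborel::'a measure))
      = complex_of_real (inverse ?N) * (\<integral>\<xi>. complex_of_real (gauss_kernel (1/\<sigma>) \<xi>) * iexp (\<xi> \<bullet> v) \<partial>(lborel::'a measure))"
    unfolding eq by (simp only: mult.assoc integral_mult_right_zero)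
  also have "\<dots> = complex_of_real (inverse ?N) * complex_of_real (exp (- (1/\<sigma>)\<^sup>2 * (v \<bullet> v) / 2))"
    using gauss_kernel_iexp(2)[OF s', of v] by simp
  finally have 1: "(\<integral>\<xi>. complex_of_real (exp (- \<sigma>\<^sup>2 * (\<xi> \<bullet> \<xi>) / 2)) * iexp (\<xi> \<bullet> v) \<partial>(lborel::'a measure))
      = complex_of_real (inverse ?N * exp (- (1/\<sigma>)\<^sup>2 * (v \<bullet> v) / 2))" by simp
  have 2: "gauss_kernel \<sigma> v = gauss_const \<sigma> DIM('a) * exp (- (v \<bullet> v) / (2 * \<sigma>\<^sup>2))" by (rule gauss_kernel_eq_exp[OF s])
  have 3: "- (1/\<sigma>)\<^sup>2 * (v \<bullet> v) / 2 = - (v \<bullet> v) / (2 * \<sigma>\<^sup>2)"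
    using s by (simp add: field_simps power2_eq_square)
  have 4: "inverse ((2 * pi) ^ DIM('a)) * inverse ?N = gauss_const \<sigma> DIM('a)"
    using gauss_const_inverse[OF s, of "DIM('a)"] by (simp add: divide_inverse)
  show "complex_of_real (inverse ((2 * pi) ^ DIM('a))) *
          (\<integral>\<xi>. complex_of_real (exp (- \<sigma>\<^sup>2 * (\<xi> \<bullet> \<xi>) / 2)) * iexp (\<xi> \<bullet> v) \<partial>(lborel::'a measure))
        = complex_of_real (gauss_kernel \<sigma> v)"
  proof -
    have "complex_of_real (inverse ((2 * pi) ^ DIM('a))) * complex_of_real (inverse ?N * exp (- (v \<bullet> v) / (2 * \<sigma>\<^sup>2)))
        = complex_of_real ((inverse ((2 * pi) ^ DIM('a)) * inverse ?N) * exp (- (v \<bullet> v) / (2 * \<sigma>\<^sup>2)))"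
      by (simp only: of_real_mult mult.assoc)
    thus ?thesis unfolding 1 2 3 4 .
  qed
qed

section \<open>Fourier inversion\<close>

definition fourier :: "('a::euclidean_space \<Rightarrow> complex) \<Rightarrow> 'a \<Rightarrow> complex" where
  "fourier g \<xi> = (\<integral>y. g y * exp (- \<i> * complex_of_real (\<xi> \<bullet> y)) \<partial>lborel)"

lemma lborel_distr_reflect: "distr lborel borel (\<lambda>x. a - x) = (lborel :: 'a::euclidean_space measure)"
proof -
  have "lborel = density (distr lborel borel (\<lambda>x. a + (-1::real) *\<^sub>R x)) (\<lambda>_. \<bar>-1::real\<bar>^DIM('a))"
    by (rule lborel_affine) simp
  thus ?thesis by (simp add: density_1)
qed

lemma integral_reflect:
  fixes f :: "'a::euclidean_space \<Rightarrow> 'b::{banach,second_countable_topology}"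
  assumes [measurable]: "f \<in> borel_measurable borel"
  shows "(\<integral>w. f (a - w) \<partial>lborel) = (\<integral>v. f v \<partial>lborel)"
proof -
  have "(\<integral>v. f v \<partial>lborel) = (\<integral>v. f v \<partial>(distr lborel borel (\<lambda>x. a - x)))"
    by (simp add: lborel_distr_reflect)
  also have "\<dots> = (\<integral>w. f (a - w) \<partial>lborel)"
    by (rule integral_distr) auto
  finally show ?thesis by simp
qed

lemma integrable_reflect:
  fixes f :: "'a::euclidean_space \<Rightarrow> 'b::{banach,second_countable_topology}"
  assumes [measurable]: "f \<in> borel_measurable borel"
  shows "integrable lborel (\<lambda>w. f (a - w)) \<longleftrightarrow> integrable lborel f"
proof -
  have "integrable lborel f \<longleftrightarrow> integrable (distr lborel borel (\<lambda>x. a - x)) f"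
    by (simp add: lborel_distr_reflect)
  also have "\<dots> \<longleftrightarrow> integrable lborel (\<lambda>w. f (a - w))"
    by (rule integrable_distr_eq) auto
  finally show ?thesis by simp
qed

lemma iexp_add: "iexp (s + t) = iexp s * iexp t" by (simp add: algebra_simps exp_add[symmetric])

lemma iexp_diff_inner: "iexp ((a - v) \<bullet> \<xi>) = iexp (a \<bullet> \<xi>) * iexp (v \<bullet> (- \<xi>))"
proof -
  have "(a - v) \<bullet> \<xi> = a \<bullet> \<xi> + v \<bullet> (- \<xi>)" by (simp add: inner_diff_left)
  hence "iexp ((a - v) \<bullet> \<xi>) = iexp (a \<bullet> \<xi> + v \<bullet> (- \<xi>))" by (simp only:)
  thus ?thesis by (simp only: iexp_add)
qed

lemma iexp_shift: "exp (- \<i> * complex_of_real (\<xi> \<bullet> y)) * iexp (a \<bullet> \<xi>) = iexp (\<xi> \<bullet> (a - y))"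
proof -
  have "\<xi> \<bullet> (a - y) = a \<bullet> \<xi> + (- (\<xi> \<bullet> y))" by (simp add: inner_diff_right inner_commute)
  hence "iexp (\<xi> \<bullet> (a - y)) = iexp (a \<bullet> \<xi> + (- (\<xi> \<bullet> y)))" by (simp only:)
  also have "\<dots> = iexp (a \<bullet> \<xi>) * iexp (- (\<xi> \<bullet> y))" by (rule iexp_add)
  finally show ?thesis by (simp add: mult.commute)
qed

lemma integral_gauss_kernel_reflect_iexp:
  assumes s: "\<sigma> > 0"
  shows "(\<integral>w. complex_of_real (gauss_kernel \<sigma> (a - w)) * iexp (w \<bullet> \<xi>) \<partial>lborel)
       = iexp (a \<bullet> \<xi>) * complex_of_real (exp (- \<sigma>\<^sup>2 * (\<xi> \<bullet> \<xi>) / 2))"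
proof -
  let ?f = "\<lambda>v. complex_of_real (gauss_kernel \<sigma> v) * iexp ((a - v) \<bullet> \<xi>)"
  have "(\<integral>w. complex_of_real (gauss_kernel \<sigma> (a - w)) * iexp (w \<bullet> \<xi>) \<partial>lborel) = (\<integral>w. ?f (a - w) \<partial>lborel)"
    by simp
  also have "\<dots> = (\<integral>v. ?f v \<partial>lborel)"
    by (rule integral_reflect) measurable
  also have "\<dots> = (\<integral>v. iexp (a \<bullet> \<xi>) * (complex_of_real (gauss_kernel \<sigma> v) * iexp (v \<bullet> (- \<xi>))) \<partial>lborel)"
    by (rule Bochner_Integration.integral_cong) (simp_all only: iexp_diff_inner mult.assoc mult.left_commute mult.commute)
  also have "\<dots> = iexp (a \<bullet> \<xi>) * (\<integral>v. complex_of_real (gauss_kernel \<sigma> v) * iexp (v \<bullet> (- \<xi>)) \<partial>lborel)"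
    by (rule integral_mult_right_zero)
  also have "\<dots> = iexp (a \<bullet> \<xi>) * complex_of_real (exp (- \<sigma>\<^sup>2 * (\<xi> \<bullet> \<xi>) / 2))"
    using gauss_kernel_iexp(2)[OF s, of "- \<xi>"] by simp
  finally show ?thesis .
qed

lemma gauss_smoothing_inverse_integral:
  fixes G :: "'a::euclidean_space \<Rightarrow> complex"
  assumes G: "integrable lborel G" and s: "\<sigma> > 0"
  shows "(\<integral>w. (\<integral>\<xi>. G \<xi> * iexp (w \<bullet> \<xi>) \<partial>lborel) * complex_of_real (gauss_kernel \<sigma> (a - w)) \<partial>lborel)
       = (\<integral>\<xi>. G \<xi> * iexp (a \<bullet> \<xi>) * complex_of_real (exp (- \<sigma>\<^sup>2 * (\<xi> \<bullet> \<xi>) / 2)) \<partial>lborel)"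
proof -
  let ?k = "\<lambda>w. complex_of_real (gauss_kernel \<sigma> (a - w))"
  have ki: "integrable lborel ?k"
  proof -
    have "integrable lborel (\<lambda>v. complex_of_real (gauss_kernel \<sigma> v))" by (rule integrable_of_real) (rule integrable_gauss_kernel[OF s])
    thus ?thesis using integrable_reflect[of "\<lambda>v. complex_of_real (gauss_kernel \<sigma> v)" a] by simp
  qed
  have e_meas: "(\<lambda>(w, \<xi>). iexp (w \<bullet> \<xi>)) \<in> borel_measurable (lborel \<Otimes>\<^sub>M lborel)" by measurable
  have "(\<integral>w. (\<integral>\<xi>. G \<xi> * iexp (w \<bullet> \<xi>) \<partial>lborel) * ?k w \<partial>lborel)
      = (\<integral>w. (\<integral>\<xi>. ?k w * G \<xi> * iexp (w \<bullet> \<xi>) \<partial>lborel) \<partial>lborel)"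
  proof (rule Bochner_Integration.integral_cong[OF refl])
    fix w
    have "(\<integral>\<xi>. ?k w * G \<xi> * iexp (w \<bullet> \<xi>) \<partial>lborel) = ?k w * (\<integral>\<xi>. G \<xi> * iexp (w \<bullet> \<xi>) \<partial>lborel)"
      by (simp only: mult.assoc integral_mult_right_zero)
    thus "(\<integral>\<xi>. G \<xi> * iexp (w \<bullet> \<xi>) \<partial>lborel) * ?k w = (\<integral>\<xi>. ?k w * G \<xi> * iexp (w \<bullet> \<xi>) \<partial>lborel)"
      by (metis mult.commute)
  qed
  also have "\<dots> = (\<integral>\<xi>. (\<integral>w. ?k w * G \<xi> * iexp (w \<bullet> \<xi>) \<partial>lborel) \<partial>lborel)"
    by (rule Fubini_unimodular_kernel[OF ki G e_meas]) simp
  also have "\<dots> = (\<integral>\<xi>. G \<xi> * (\<integral>w. ?k w * iexp (w \<bullet> \<xi>) \<partial>lborel) \<partial>lborel)"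
  proof (rule Bochner_Integration.integral_cong[OF refl])
    fix \<xi>
    have "(\<integral>w. ?k w * G \<xi> * iexp (w \<bullet> \<xi>) \<partial>lborel) = (\<integral>w. G \<xi> * (?k w * iexp (w \<bullet> \<xi>)) \<partial>lborel)"
      by (rule Bochner_Integration.integral_cong) (simp_all add: mult_ac)
    thus "(\<integral>w. ?k w * G \<xi> * iexp (w \<bullet> \<xi>) \<partial>lborel) = G \<xi> * (\<integral>w. ?k w * iexp (w \<bullet> \<xi>) \<partial>lborel)"
      by (simp only: integral_mult_right_zero)
  qed
  also have "\<dots> = (\<integral>\<xi>. G \<xi> * iexp (a \<bullet> \<xi>) * complex_of_real (exp (- \<sigma>\<^sup>2 * (\<xi> \<bullet> \<xi>) / 2)) \<partial>lborel)"
    by (rule Bochner_Integration.integral_cong) (simp_all add: integral_gauss_kernel_reflect_iexp[OF s] mult_ac)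
  finally show ?thesis .
qed

lemma inverse_integral_gauss_damped_fourier:
  fixes g :: "'a::euclidean_space \<Rightarrow> complex"
  assumes g: "integrable lborel g" and s: "\<sigma> > 0"
  shows "complex_of_real (inverse ((2 * pi) ^ DIM('a))) *
           (\<integral>\<xi>. fourier g \<xi> * iexp (a \<bullet> \<xi>) * complex_of_real (exp (- \<sigma>\<^sup>2 * (\<xi> \<bullet> \<xi>) / 2)) \<partial>lborel)
         = (\<integral>w. g w * complex_of_real (gauss_kernel \<sigma> (a - w)) \<partial>lborel)"
proof -
  let ?c = "complex_of_real (inverse ((2 * pi) ^ DIM('a)))"
  let ?e = "\<lambda>\<xi>::'a. complex_of_real (exp (- \<sigma>\<^sup>2 * (\<xi> \<bullet> \<xi>) / 2))"
  have ei: "integrable lborel ?e" by (rule fourier_inv_gauss(1)[OF s])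
  have e_meas: "(\<lambda>(\<xi>, y). iexp (\<xi> \<bullet> (a - y))) \<in> borel_measurable (lborel \<Otimes>\<^sub>M (lborel::'a measure))" by measurable
  have "(\<integral>\<xi>. fourier g \<xi> * iexp (a \<bullet> \<xi>) * ?e \<xi> \<partial>lborel) = (\<integral>\<xi>. (\<integral>y. ?e \<xi> * g y * iexp (\<xi> \<bullet> (a - y)) \<partial>lborel) \<partial>lborel)"
  proof (rule Bochner_Integration.integral_cong[OF refl])
    fix \<xi> :: 'a
    have "fourier g \<xi> * iexp (a \<bullet> \<xi>) * ?e \<xi> = fourier g \<xi> * (iexp (a \<bullet> \<xi>) * ?e \<xi>)"
      by (rule mult.assoc)
    also have "\<dots> = (\<integral>y. g y * exp (- \<i> * complex_of_real (\<xi> \<bullet> y)) * (iexp (a \<bullet> \<xi>) * ?e \<xi>) \<partial>lborel)"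
      unfolding fourier_def by (rule integral_mult_left_zero[symmetric])
    also have "\<dots> = (\<integral>y. ?e \<xi> * g y * iexp (\<xi> \<bullet> (a - y)) \<partial>lborel)"
    proof (rule Bochner_Integration.integral_cong[OF refl])
      fix y
      have "g y * exp (- \<i> * complex_of_real (\<xi> \<bullet> y)) * (iexp (a \<bullet> \<xi>) * ?e \<xi>)
          = ?e \<xi> * g y * (exp (- \<i> * complex_of_real (\<xi> \<bullet> y)) * iexp (a \<bullet> \<xi>))"
        by (simp only: mult_ac)
      thus "g y * exp (- \<i> * complex_of_real (\<xi> \<bullet> y)) * (iexp (a \<bullet> \<xi>) * ?e \<xi>) = ?e \<xi> * g y * iexp (\<xi> \<bullet> (a - y))"
        by (simp only: iexp_shift)
    qed
    finally show "fourier g \<xi> * iexp (a \<bullet> \<xi>) * ?e \<xi> = (\<integral>y. ?e \<xi> * g y * iexp (\<xi> \<bullet> (a - y)) \<partial>lborel)" .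
  qed
  also have "\<dots> = (\<integral>y. (\<integral>\<xi>. ?e \<xi> * g y * iexp (\<xi> \<bullet> (a - y)) \<partial>lborel) \<partial>lborel)"
    by (rule Fubini_unimodular_kernel[OF ei g e_meas]) simp
  also have "\<dots> = (\<integral>y. g y * (\<integral>\<xi>. ?e \<xi> * iexp (\<xi> \<bullet> (a - y)) \<partial>lborel) \<partial>lborel)"
  proof (rule Bochner_Integration.integral_cong[OF refl])
    fix y
    have "(\<integral>\<xi>. ?e \<xi> * g y * iexp (\<xi> \<bullet> (a - y)) \<partial>lborel) = (\<integral>\<xi>. g y * (?e \<xi> * iexp (\<xi> \<bullet> (a - y))) \<partial>lborel)"
      by (rule Bochner_Integration.integral_cong[OF refl]) (simp only: mult_ac)
    thus "(\<integral>\<xi>. ?e \<xi> * g y * iexp (\<xi> \<bullet> (a - y)) \<partial>lborel) = g y * (\<integral>\<xi>. ?e \<xi> * iexp (\<xi> \<bullet> (a - y)) \<partial>lborel)"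
      by (simp only: integral_mult_right_zero)
  qed
  finally have 0: "(\<integral>\<xi>. fourier g \<xi> * iexp (a \<bullet> \<xi>) * ?e \<xi> \<partial>lborel)
      = (\<integral>y. g y * (\<integral>\<xi>. ?e \<xi> * iexp (\<xi> \<bullet> (a - y)) \<partial>lborel) \<partial>lborel)" .
  have 1: "(\<integral>y. g y * (?c * (\<integral>\<xi>. ?e \<xi> * iexp (\<xi> \<bullet> (a - y)) \<partial>lborel)) \<partial>lborel)
      = ?c * (\<integral>y. g y * (\<integral>\<xi>. ?e \<xi> * iexp (\<xi> \<bullet> (a - y)) \<partial>lborel) \<partial>lborel)"
  proof -
    have "(\<integral>y. g y * (?c * (\<integral>\<xi>. ?e \<xi> * iexp (\<xi> \<bullet> (a - y)) \<partial>lborel)) \<partial>lborel)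
        = (\<integral>y. ?c * (g y * (\<integral>\<xi>. ?e \<xi> * iexp (\<xi> \<bullet> (a - y)) \<partial>lborel)) \<partial>lborel)"
      by (simp only: mult.left_commute)
    thus ?thesis by (simp only: integral_mult_right_zero)
  qed
  show ?thesis unfolding 0 1[symmetric] fourier_inv_gauss(2)[OF s] ..
qed

lemma gauss_smoothing_fourier_inv_fourier:
  fixes g :: "real^'n::finite \<Rightarrow> complex"
  assumes g: "integrable lborel g" and G: "integrable lborel (fourier g)" and s: "\<sigma> > 0"
  shows "(\<integral>w. fourier_inv (fourier g) w * complex_of_real (gauss_kernel \<sigma> (a - w)) \<partial>lborel)
       = (\<integral>w. g w * complex_of_real (gauss_kernel \<sigma> (a - w)) \<partial>lborel)"
proof -
  let ?c = "complex_of_real (inverse ((2 * pi) ^ CARD('n)))"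
  have "(\<integral>w. fourier_inv (fourier g) w * complex_of_real (gauss_kernel \<sigma> (a - w)) \<partial>lborel)
      = ?c * (\<integral>w. (\<integral>\<xi>. fourier g \<xi> * iexp (w \<bullet> \<xi>) \<partial>lborel) * complex_of_real (gauss_kernel \<sigma> (a - w)) \<partial>lborel)"
    unfolding fourier_inv_def by (simp add: mult.assoc)
  also have "\<dots> = ?c * (\<integral>\<xi>. fourier g \<xi> * iexp (a \<bullet> \<xi>) * complex_of_real (exp (- \<sigma>\<^sup>2 * (\<xi> \<bullet> \<xi>) / 2)) \<partial>lborel)"
    by (simp only: gauss_smoothing_inverse_integral[OF G s])
  also have "\<dots> = (\<integral>w. g w * complex_of_real (gauss_kernel \<sigma> (a - w)) \<partial>lborel)"
    using inverse_integral_gauss_damped_fourier[OF g s, of a] by simp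
  finally show ?thesis .
qed

lemma AE_zero_if_box_integrals_zero_real:
  fixes f :: "'a::euclidean_space \<Rightarrow> real"
  assumes f: "integrable lborel f"
    and z: "\<And>l u. (\<integral>x. indicator (box l u) x * f x \<partial>lborel) = 0"
  shows "AE x in lborel. f x = 0"
proof -
  have fm[measurable]: "f \<in> borel_measurable borel" using f by auto
  let ?fp = "\<lambda>x. ennreal (max 0 (f x))" and ?fm = "\<lambda>x. ennreal (max 0 (- f x))"
  have ip: "integrable lborel (\<lambda>x. max 0 (f x))" using f by auto
  have im: "integrable lborel (\<lambda>x. max 0 (- f x))" using f by auto
  have box_eq: "emeasure (density lborel ?fp) (box l u) = emeasure (density lborel ?fm) (box l u)" for l u :: 'a
  proof -
    have "emeasure (density lborel ?fp) (box l u) = (\<integral>\<^sup>+ x. ennreal (indicator (box l u) x * max 0 (f x)) \<partial>lborel)"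
      by (subst emeasure_density) (auto intro!: nn_integral_cong simp: indicator_def)
    also have "\<dots> = ennreal (\<integral>x. indicator (box l u) x * max 0 (f x) \<partial>lborel)"
      by (rule nn_integral_eq_integral) (use integrable_mult_indicator[OF _ ip, of "box l u"] in simp_all)
    finally have 1: "emeasure (density lborel ?fp) (box l u) = ennreal (\<integral>x. indicator (box l u) x * max 0 (f x) \<partial>lborel)" .
    have "emeasure (density lborel ?fm) (box l u) = (\<integral>\<^sup>+ x. ennreal (indicator (box l u) x * max 0 (- f x)) \<partial>lborel)"
      by (subst emeasure_density) (auto intro!: nn_integral_cong simp: indicator_def)
    also have "\<dots> = ennreal (\<integral>x. indicator (box l u) x * max 0 (- f x) \<partial>lborel)"
      by (rule nn_integral_eq_integral) (use integrable_mult_indicator[OF _ im, of "box l u"] in simp_all)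
    finally have 2: "emeasure (density lborel ?fm) (box l u) = ennreal (\<integral>x. indicator (box l u) x * max 0 (- f x) \<partial>lborel)" .
    have "(\<integral>x. indicator (box l u) x * f x \<partial>lborel)
        = (\<integral>x. indicator (box l u) x * max 0 (f x) - indicator (box l u) x * max 0 (- f x) \<partial>lborel)"
      by (rule Bochner_Integration.integral_cong) (auto simp: indicator_def)
    also have "\<dots> = (\<integral>x. indicator (box l u) x * max 0 (f x) \<partial>lborel) - (\<integral>x. indicator (box l u) x * max 0 (- f x) \<partial>lborel)"
      by (rule Bochner_Integration.integral_diff) (use integrable_mult_indicator[OF _ im, of "box l u"] integrable_mult_indicator[OF _ ip, of "box l u"] in simp_all)
    finally show ?thesis using 1 2 z[of l u] by simp
  qed
  have dens: "density lborel ?fp = density lborel ?fm"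
  proof (rule measure_eqI_generator_eq)
    let ?E = "range (\<lambda>(a, b). box a b::'a set)"
    show "Int_stable ?E"
      by (auto simp: Int_stable_def box_Int_box)
    show "?E \<subseteq> Pow UNIV" by simp
    show "sets (density lborel ?fp) = sigma_sets UNIV ?E" "sets (density lborel ?fm) = sigma_sets UNIV ?E"
      by (simp_all add: borel_eq_box)
    let ?A = "\<lambda>n::nat. box (- (real n *\<^sub>R One)) (real n *\<^sub>R One) :: 'a set"
    show "range ?A \<subseteq> ?E" "(\<Union>i. ?A i) = UNIV"
      unfolding UN_box_eq_UNIV by auto
    show "emeasure (density lborel ?fp) (?A i) \<noteq> \<infinity>" for i
    proof -
      have "emeasure (density lborel ?fp) (?A i) \<le> emeasure (density lborel ?fp) UNIV"
        by (rule emeasure_mono) auto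
      also have "\<dots> = (\<integral>\<^sup>+ x. ?fp x \<partial>lborel)"
        by (subst emeasure_density) auto
      also have "\<dots> < \<infinity>"
        using ip by (simp add: integrable_iff_bounded)
      finally show ?thesis by simp
    qed
    show "emeasure (density lborel ?fp) X = emeasure (density lborel ?fm) X" if "X \<in> ?E" for X
      using that box_eq by auto
  qed
  have "AE x in lborel. ?fp x = ?fm x"
    by (rule sigma_finite_measure.density_unique[OF sigma_finite_lborel _ _ dens]) auto
  thus ?thesis
    by eventually_elim (auto simp: max_def split: if_splits)
qed

lemma AE_zero_if_box_integrals_zero:
  fixes f :: "'a::euclidean_space \<Rightarrow> complex"
  assumes f: "integrable lborel f"
    and z: "\<And>l u. (\<integral>x. indicator (box l u) x * f x \<partial>lborel) = 0"
  shows "AE x in lborel. f x = 0"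
proof -
  have "AE x in lborel. T (f x) = 0" if T: "bounded_linear T" for T :: "complex \<Rightarrow> real"
  proof (rule AE_zero_if_box_integrals_zero_real)
    interpret T: bounded_linear T by (rule T)
    show "integrable lborel (\<lambda>x. T (f x))"
      by (rule integrable_bounded_linear[OF T f])
    fix l u :: 'a
    have "(\<lambda>x. indicator (box l u) x * f x) = (\<lambda>x. indicator (box l u) x *\<^sub>R f x)"
      by (auto simp: fun_eq_iff indicator_def)
    then have fi: "integrable lborel (\<lambda>x. indicator (box l u) x * f x)"
      using integrable_mult_indicator[OF _ f, of "box l u"] by simp
    have "(\<integral>x. indicator (box l u) x * T (f x) \<partial>lborel) = (\<integral>x. T (indicator (box l u) x * f x) \<partial>lborel)"
      by (intro Bochner_Integration.integral_cong) (auto simp: indicator_def T.zero)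
    also have "\<dots> = T (\<integral>x. indicator (box l u) x * f x \<partial>lborel)"
      by (rule integral_bounded_linear[OF T fi])
    finally show "(\<integral>x. indicator (box l u) x * T (f x) \<partial>lborel) = 0"
      using z T.zero by simp
  qed
  from this[OF bounded_linear_Re] this[OF bounded_linear_Im] show ?thesis
    by eventually_elim (simp add: complex_eq_iff)
qed

definition gauss_smoothed_indicator :: "'a::euclidean_space set \<Rightarrow> real \<Rightarrow> 'a \<Rightarrow> real" where
  "gauss_smoothed_indicator A \<tau> w = (\<integral>z. indicator A (w + \<tau> *\<^sub>R z) * gauss_kernel 1 z \<partial>lborel)"

lemma gauss_smoothed_indicator_measurable[measurable]:
  assumes [measurable]: "A \<in> sets borel"
  shows "gauss_smoothed_indicator A \<tau> \<in> borel_measurable borel"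
  unfolding gauss_smoothed_indicator_def by measurable

lemma integral_indicator_mult_gauss_kernel:
  assumes t: "\<tau> > 0" and A[measurable]: "A \<in> sets borel"
  shows "(\<integral>b. indicator A b * gauss_kernel \<tau> (b - w) \<partial>lborel) = gauss_smoothed_indicator A \<tau> (w::'a::euclidean_space)"
proof -
  let ?f = "\<lambda>b::'a. indicator A b * gauss_kernel \<tau> (b - w)"
  have fm[measurable]: "?f \<in> borel_measurable borel" by measurable
  have "(\<integral>b. ?f b \<partial>lborel) = (\<integral>b. ?f b \<partial>(density (distr lborel borel (\<lambda>z. w + \<tau> *\<^sub>R z)) (\<lambda>_. \<bar>\<tau>\<bar>^DIM('a))))"
    using lborel_affine[of \<tau> w] t by simp
  also have "\<dots> = (\<integral>b. \<bar>\<tau>\<bar>^DIM('a) *\<^sub>R ?f b \<partial>(distr lborel borel (\<lambda>z. w + \<tau> *\<^sub>R z)))"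
    by (rule integral_density) auto
  also have "\<dots> = (\<integral>z. \<bar>\<tau>\<bar>^DIM('a) *\<^sub>R ?f (w + \<tau> *\<^sub>R z) \<partial>lborel)"
    by (rule integral_distr) auto
  also have "\<dots> = (\<integral>z. indicator A (w + \<tau> *\<^sub>R z) * gauss_kernel 1 z \<partial>lborel)"
  proof (rule Bochner_Integration.integral_cong[OF refl])
    fix z :: 'a
    have "\<bar>\<tau>\<bar>^DIM('a) * gauss_kernel \<tau> (w + \<tau> *\<^sub>R z - w) = gauss_kernel 1 z" using gauss_kernel_scale[OF t, of z] t by simp
    thus "\<bar>\<tau>\<bar>^DIM('a) *\<^sub>R ?f (w + \<tau> *\<^sub>R z) = indicator A (w + \<tau> *\<^sub>R z) * gauss_kernel 1 z"
      by (simp add: mult_ac)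
  qed
  finally show ?thesis
    unfolding gauss_smoothed_indicator_def .
qed

lemma gauss_smoothed_indicator_bounds:
  assumes A[measurable]: "A \<in> sets borel"
  shows "0 \<le> gauss_smoothed_indicator A \<tau> (w::'a::euclidean_space)"
    and "gauss_smoothed_indicator A \<tau> w \<le> 1"
  unfolding gauss_smoothed_indicator_def
proof -
  show "0 \<le> (\<integral>z. indicator A (w + \<tau> *\<^sub>R z) * gauss_kernel 1 z \<partial>(lborel::'a::euclidean_space measure))"
    by (rule integral_nonneg_AE) (auto simp: gauss_kernel_nonneg)
  have "(\<integral>z. indicator A (w + \<tau> *\<^sub>R z) * gauss_kernel 1 z \<partial>(lborel::'a::euclidean_space measure)) \<le> (\<integral>z. gauss_kernel 1 z \<partial>(lborel::'a measure))"
    by (rule integral_mono)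
       (auto intro!: Bochner_Integration.integrable_bound[OF integrable_gauss_kernel[OF zero_less_one]]
             simp: gauss_kernel_nonneg integrable_gauss_kernel indicator_def)
  thus "(\<integral>z. indicator A (w + \<tau> *\<^sub>R z) * gauss_kernel 1 z \<partial>(lborel::'a::euclidean_space measure)) \<le> 1"
    using integral_gauss_kernel[OF zero_less_one, where 'a='a] by simp
qed

lemma gauss_smoothed_indicator_tendsto:
  fixes w :: "'a::euclidean_space"
  assumes w: "w \<in> box l r \<or> w \<notin> cbox l r"
    and tl: "t \<longlonglongrightarrow> 0"
  shows "(\<lambda>n. gauss_smoothed_indicator (box l r) (t n) w) \<longlonglongrightarrow> indicator (box l r) w"
proof -
  have lim: "(\<lambda>n. \<integral>z. indicator (box l r) (w + t n *\<^sub>R z) * gauss_kernel 1 z \<partial>lborel) \<longlonglongrightarrow> (\<integral>z. indicator (box l r) w * gauss_kernel 1 z \<partial>(lborel::'a measure))"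
  proof (rule integral_dominated_convergence[where w="gauss_kernel 1"])
    show "integrable lborel (gauss_kernel 1 :: 'a \<Rightarrow> real)" by (rule integrable_gauss_kernel) simp
    show "AE z in lborel. (\<lambda>n. indicator (box l r) (w + t n *\<^sub>R z) * gauss_kernel 1 z) \<longlonglongrightarrow> indicator (box l r) w * gauss_kernel 1 z"
    proof (rule AE_I2)
      fix z :: 'a
      have c: "(\<lambda>n. w + t n *\<^sub>R z) \<longlonglongrightarrow> w"
        using tendsto_add[OF tendsto_const tendsto_scaleR[OF tl tendsto_const, of z]] by simp
      have "eventually (\<lambda>n. indicator (box l r) (w + t n *\<^sub>R z) = (indicator (box l r) w :: real)) sequentially"
        using w
      proof
        assume wb: "w \<in> box l r"
        have "eventually (\<lambda>n. w + t n *\<^sub>R z \<in> box l r) sequentially"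
          by (rule topological_tendstoD[OF c open_box wb])
        thus ?thesis by eventually_elim (use wb in simp)
      next
        assume wb: "w \<notin> cbox l r"
        have "eventually (\<lambda>n. w + t n *\<^sub>R z \<in> - cbox l r) sequentially"
          by (rule topological_tendstoD[OF c]) (use wb in auto)
        thus ?thesis by eventually_elim (use wb box_subset_cbox in \<open>auto simp: indicator_def\<close>)
      qed
      thus "(\<lambda>n. indicator (box l r) (w + t n *\<^sub>R z) * gauss_kernel 1 z) \<longlonglongrightarrow> indicator (box l r) w * gauss_kernel 1 z"
      proof -
        assume ev: "eventually (\<lambda>n. indicator (box l r) (w + t n *\<^sub>R z) = (indicator (box l r) w :: real)) sequentially"
        have "eventually (\<lambda>n. indicator (box l r) w * gauss_kernel 1 z = indicator (box l r) (w + t n *\<^sub>R z) * gauss_kernel 1 z) sequentially"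
          using ev by eventually_elim simp
        thus ?thesis by (rule Lim_transform_eventually[OF tendsto_const])
      qed
    qed
    fix n
    show "AE z in lborel. norm (indicator (box l r) (w + t n *\<^sub>R z) * gauss_kernel 1 z) \<le> gauss_kernel 1 z"
      by (auto simp: gauss_kernel_nonneg indicator_def)
  qed auto
  moreover have "(\<integral>z. indicator (box l r) w * gauss_kernel 1 z \<partial>(lborel::'a measure)) = indicator (box l r) w"
    using integral_gauss_kernel[OF zero_less_one, where 'a='a] by simp
  ultimately show ?thesis
    unfolding gauss_smoothed_indicator_def using integral_gauss_kernel[OF zero_less_one, where 'a='a] by simp
qed

lemma integrable_mult_indicator_gauss_kernel:
  fixes H :: "'a::euclidean_space \<Rightarrow> complex"
  assumes H: "integrable lborel H" and t: "\<tau> > 0" and A[measurable]: "A \<in> sets borel"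
  shows "integrable (lborel \<Otimes>\<^sub>M lborel)
    (\<lambda>(w, b). H w * complex_of_real (indicator A b * gauss_kernel \<tau> (b - w)))"
proof -
  have [measurable]: "H \<in> borel_measurable borel"
    using H by auto
  let ?F = "\<lambda>w b. H w * complex_of_real (indicator A b * gauss_kernel \<tau> (b - w))"
  have F_meas: "(\<lambda>(w, b). ?F w b) \<in> borel_measurable (lborel \<Otimes>\<^sub>M lborel)" by measurable
  have norm_F_integral: "(\<integral>b. norm (?F w b) \<partial>lborel) = norm (H w) * gauss_smoothed_indicator A \<tau> w" for w
  proof -
    have "(\<integral>b. norm (?F w b) \<partial>lborel) = (\<integral>b. norm (H w) * (indicator A b * gauss_kernel \<tau> (b - w)) \<partial>lborel)"
      by (rule Bochner_Integration.integral_cong[OF refl]) (simp add: norm_mult gauss_kernel_nonneg abs_mult)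
    also have "\<dots> = norm (H w) * (\<integral>b. indicator A b * gauss_kernel \<tau> (b - w) \<partial>lborel)"
      by (rule integral_mult_right_zero)
    also have "\<dots> = norm (H w) * gauss_smoothed_indicator A \<tau> w"
      by (simp add: integral_indicator_mult_gauss_kernel[OF t A])
    finally show ?thesis .
  qed
  have K_integrable: "integrable lborel (\<lambda>b. gauss_kernel \<tau> (b - w))" for w
  proof -
    have "integrable lborel (\<lambda>b. gauss_kernel \<tau> (w - b))"
      using integrable_reflect[of "gauss_kernel \<tau>" w] integrable_gauss_kernel[OF t] by simp
    moreover have "(\<lambda>b. gauss_kernel \<tau> (w - b)) = (\<lambda>b. gauss_kernel \<tau> (b - w))"
      by (rule ext) (metis gauss_kernel_minus minus_diff_eq)
    ultimately show ?thesis by simp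
  qed
  show ?thesis
  proof (rule lborel_pair.Fubini_integrable[OF F_meas])
    show "integrable lborel (\<lambda>w. \<integral>b. norm (case (w, b) of (w, b) \<Rightarrow> ?F w b) \<partial>lborel)"
      unfolding case_prod_conv norm_F_integral
      by (rule Bochner_Integration.integrable_bound[where f="\<lambda>w. norm (H w)"])
         (auto simp: H abs_mult gauss_smoothed_indicator_bounds[OF A] intro!: mult_left_le)
    show "AE w in lborel. integrable lborel (\<lambda>b. case (w, b) of (w, b) \<Rightarrow> ?F w b)"
    proof (rule AE_I2)
      fix w
      show "integrable lborel (\<lambda>b. case (w, b) of (w, b) \<Rightarrow> ?F w b)"
        unfolding case_prod_conv
        by (rule Bochner_Integration.integrable_bound[where f="\<lambda>b. norm (H w) * gauss_kernel \<tau> (b - w)"])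
           (auto intro!: integrable_mult_right K_integrable simp: norm_mult gauss_kernel_nonneg abs_mult indicator_def mult_left_le)
    qed
  qed
qed

lemma integral_mult_gauss_smoothed_indicator_eq_0:
  fixes H :: "'a::euclidean_space \<Rightarrow> complex"
  assumes H: "integrable lborel H" and t: "\<tau> > 0" and A[measurable]: "A \<in> sets borel"
    and z: "\<And>b. (\<integral>w. H w * complex_of_real (gauss_kernel \<tau> (b - w)) \<partial>lborel) = 0"
  shows "(\<integral>w. H w * complex_of_real (gauss_smoothed_indicator A \<tau> w) \<partial>lborel) = 0"
proof -
  let ?F = "\<lambda>w b. H w * complex_of_real (indicator A b * gauss_kernel \<tau> (b - w))"
  have swap: "(\<integral>b. (\<integral>w. ?F w b \<partial>lborel) \<partial>lborel) = (\<integral>w. (\<integral>b. ?F w b \<partial>lborel) \<partial>lborel)"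
    by (rule lborel_pair.Fubini_integral[OF integrable_mult_indicator_gauss_kernel[OF H t A]])
  have inner_w: "(\<integral>w. ?F w b \<partial>lborel) = 0" for b
  proof -
    have "(\<integral>w. ?F w b \<partial>lborel) = (\<integral>w. complex_of_real (indicator A b) * (H w * complex_of_real (gauss_kernel \<tau> (b - w))) \<partial>lborel)"
      by (rule Bochner_Integration.integral_cong[OF refl]) (simp add: mult_ac)
    also have "\<dots> = complex_of_real (indicator A b) * (\<integral>w. H w * complex_of_real (gauss_kernel \<tau> (b - w)) \<partial>lborel)"
      by (rule integral_mult_right_zero)
    finally show ?thesis using z by simp
  qed
  have inner_b: "(\<integral>b. ?F w b \<partial>lborel) = H w * complex_of_real (gauss_smoothed_indicator A \<tau> w)" for w
  proof -
    have "(\<integral>b. ?F w b \<partial>lborel) = H w * (\<integral>b. complex_of_real (indicator A b * gauss_kernel \<tau> (b - w)) \<partial>lborel)"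
      by (rule integral_mult_right_zero)
    also have "\<dots> = H w * complex_of_real (\<integral>b. indicator A b * gauss_kernel \<tau> (b - w) \<partial>lborel)"
      by (simp only: integral_complex_of_real)
    also have "\<dots> = H w * complex_of_real (gauss_smoothed_indicator A \<tau> w)"
      by (simp add: integral_indicator_mult_gauss_kernel[OF t A])
    finally show ?thesis .
  qed
  have "(\<integral>w. H w * complex_of_real (gauss_smoothed_indicator A \<tau> w) \<partial>lborel) = (\<integral>w. (\<integral>b. ?F w b \<partial>lborel) \<partial>lborel)"
    by (simp only: inner_b)
  also have "\<dots> = (\<integral>b. (\<integral>w. ?F w b \<partial>lborel) \<partial>lborel)" by (rule swap[symmetric])
  also have "\<dots> = 0" by (simp only: inner_w integral_zero)
  finally show ?thesis .
qed

lemma integral_box_eq_0_if_gauss_convolutions_eq_0: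
  fixes H :: "'a::euclidean_space \<Rightarrow> complex"
  assumes H: "integrable lborel H"
    and z: "\<And>b \<tau>. \<tau> > 0 \<Longrightarrow> (\<integral>w. H w * complex_of_real (gauss_kernel \<tau> (b - w)) \<partial>lborel) = 0"
  shows "(\<integral>w. indicator (box l r) w * H w \<partial>lborel) = 0"
proof -
  let ?B = "box l r :: 'a set"
  let ?\<phi> = "gauss_smoothed_indicator ?B"
  have [measurable]: "H \<in> borel_measurable borel"
    using H by auto
  let ?t = "\<lambda>n::nat. 1 / (real n + 1)"
  have tpos: "?t n > 0" for n by simp
  have tl: "?t \<longlonglongrightarrow> 0"
    using LIMSEQ_inverse_real_of_nat by (simp add: inverse_eq_divide add.commute)
  have "(\<lambda>n. \<integral>w. H w * complex_of_real (?\<phi> (?t n) w) \<partial>lborel) \<longlonglongrightarrow> (\<integral>w. H w * complex_of_real (indicator ?B w) \<partial>lborel)"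
  proof (rule integral_dominated_convergence[where w="\<lambda>w. norm (H w)"])
    show "integrable lborel (\<lambda>w. norm (H w))" using H by simp
    have ae: "AE w in lborel. w \<notin> cbox l r - box l r"
      by (rule AE_not_in) (rule null_sets_cbox_Diff_box)
    show "AE w in lborel. (\<lambda>n. H w * complex_of_real (?\<phi> (?t n) w)) \<longlonglongrightarrow> H w * complex_of_real (indicator ?B w)"
      using ae
    proof eventually_elim
      case (elim w)
      hence "w \<in> box l r \<or> w \<notin> cbox l r" by auto
      from gauss_smoothed_indicator_tendsto[OF this tl] show ?case by (intro tendsto_mult tendsto_const tendsto_of_real)
    qed
    fix n
    show "AE w in lborel. norm (H w * complex_of_real (?\<phi> (?t n) w)) \<le> norm (H w)"
      by (auto simp: norm_mult gauss_smoothed_indicator_bounds intro!: mult_left_le)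
  qed auto
  moreover have "(\<lambda>n. \<integral>w. H w * complex_of_real (?\<phi> (?t n) w) \<partial>lborel) = (\<lambda>n. 0)"
    using integral_mult_gauss_smoothed_indicator_eq_0[OF H tpos borel_open[OF open_box] z[OF tpos]] by simp
  ultimately have "(\<integral>w. H w * complex_of_real (indicator ?B w) \<partial>lborel) = 0"
    using LIMSEQ_unique tendsto_const by metis
  moreover have "(\<integral>w. indicator ?B w * H w \<partial>lborel) = (\<integral>w. H w * complex_of_real (indicator ?B w) \<partial>lborel)"
    by (rule Bochner_Integration.integral_cong[OF refl]) (simp add: indicator_def)
  ultimately show ?thesis by simp
qed

lemma integrable_gauss_kernel_reflect:
  assumes s: "\<sigma> > 0"
  shows "integrable lborel (\<lambda>w. gauss_kernel \<sigma> (a - w :: 'a::euclidean_space))"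
  using integrable_reflect[of "gauss_kernel \<sigma>" a] integrable_gauss_kernel[OF s] by simp

lemma norm_fourier_inv_le:
  fixes G :: "real^'n::finite \<Rightarrow> complex"
  shows "norm (fourier_inv G w) \<le> inverse ((2 * pi) ^ CARD('n)) * (\<integral>\<xi>. norm (G \<xi>) \<partial>lborel)"
proof -
  have "norm (complex_of_real (inverse ((2 * pi) ^ CARD('n)))) = inverse ((2 * pi) ^ CARD('n))"
    unfolding norm_of_real by (rule abs_of_nonneg) simp
  then have "norm (fourier_inv G w) = inverse ((2 * pi) ^ CARD('n)) * norm (\<integral>\<xi>. G \<xi> * iexp (w \<bullet> \<xi>) \<partial>lborel)"
    unfolding fourier_inv_def norm_mult by (simp only:)
  also have "\<dots> \<le> inverse ((2 * pi) ^ CARD('n)) * (\<integral>\<xi>. norm (G \<xi>) \<partial>lborel)"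
    using integral_norm_bound[of lborel "\<lambda>\<xi>. G \<xi> * iexp (w \<bullet> \<xi>)"]
    by (intro mult_left_mono) (simp_all add: norm_mult norm_exp_eq_Re)
  finally show ?thesis .
qed

lemma integrable_mult_gauss_kernel_reflect:
  fixes g :: "'a::euclidean_space \<Rightarrow> complex"
  assumes g: "integrable lborel g" and s: "\<sigma> > 0"
  shows "integrable lborel (\<lambda>w. g w * complex_of_real (gauss_kernel \<sigma> (a - w)))"
proof -
  have [measurable]: "g \<in> borel_measurable borel"
    using g by auto
  have Kb: "gauss_kernel \<sigma> v \<le> gauss_const \<sigma> DIM('a)" for v :: 'a
    using gauss_kernel_le[OF s, of v] by simp
  have "gauss_const \<sigma> DIM('a) > 0"
    by (rule gauss_const_pos[OF s])
  show ?thesis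
    by (rule Bochner_Integration.integrable_bound[where f="\<lambda>w. norm (g w) * gauss_const \<sigma> DIM('a)"])
       (use \<open>gauss_const \<sigma> DIM('a) > 0\<close> in
         \<open>auto simp: g norm_mult gauss_kernel_nonneg abs_mult intro!: mult_left_mono Kb\<close>)
qed

lemma integrable_bounded_mult_gauss_kernel_reflect:
  fixes u :: "'a::euclidean_space \<Rightarrow> complex"
  assumes [measurable]: "u \<in> borel_measurable borel" and ub: "\<And>w. norm (u w) \<le> B" and s: "\<sigma> > 0"
  shows "integrable lborel (\<lambda>w. u w * complex_of_real (gauss_kernel \<sigma> (a - w)))"
proof -
  have "B \<ge> 0"
    using ub[of 0] norm_ge_zero[of "u 0"] by linarith
  show ?thesis
    by (rule Bochner_Integration.integrable_bound[where f="\<lambda>w. B * gauss_kernel \<sigma> (a - w)"])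
       (use \<open>B \<ge> 0\<close> in \<open>auto simp: norm_mult gauss_kernel_nonneg abs_mult ub
         intro!: integrable_mult_right integrable_gauss_kernel_reflect s mult_right_mono\<close>)
qed

lemma integral_mult_gauss_kernel_product_eq_0:
  fixes h :: "'a::euclidean_space \<Rightarrow> complex"
  assumes conv: "\<And>\<sigma> a. \<sigma> > 0 \<Longrightarrow> (\<integral>w. h w * complex_of_real (gauss_kernel \<sigma> (a - w)) \<partial>lborel) = 0"
    and t: "\<tau> > 0"
  shows "(\<integral>w. h w * complex_of_real (gauss_kernel 1 w) * complex_of_real (gauss_kernel \<tau> (b - w)) \<partial>lborel) = 0"
proof -
  define k where "k = 1 + \<tau>\<^sup>2"
  define \<sigma> where "\<sigma> = \<tau> / sqrt k"
  define C where "C = gauss_const 1 DIM('a) * gauss_const \<tau> DIM('a) / gauss_const \<sigma> DIM('a) * exp (- (b \<bullet> b) / (2 * k))"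
  have "\<sigma> > 0"
    unfolding \<sigma>_def k_def using t by (simp add: add_pos_nonneg)
  have "gauss_kernel 1 w * gauss_kernel \<tau> (b - w) = C * gauss_kernel \<sigma> ((1 / k) *\<^sub>R b - w)" for w :: 'a
    unfolding C_def \<sigma>_def k_def by (rule gauss_kernel_mult[OF t])
  note prod = this
  have integrand: "h w * complex_of_real (gauss_kernel 1 w) * complex_of_real (gauss_kernel \<tau> (b - w))
      = complex_of_real C * (h w * complex_of_real (gauss_kernel \<sigma> ((1 / k) *\<^sub>R b - w)))" for w
  proof -
    have "h w * complex_of_real (gauss_kernel 1 w) * complex_of_real (gauss_kernel \<tau> (b - w))
        = h w * complex_of_real (gauss_kernel 1 w * gauss_kernel \<tau> (b - w))"
      by (simp add: mult.assoc)
    also have "\<dots> = complex_of_real C * (h w * complex_of_real (gauss_kernel \<sigma> ((1 / k) *\<^sub>R b - w)))"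
      by (simp add: prod mult_ac)
    finally show ?thesis .
  qed
  then have "(\<integral>w. h w * complex_of_real (gauss_kernel 1 w) * complex_of_real (gauss_kernel \<tau> (b - w)) \<partial>lborel)
      = complex_of_real C * (\<integral>w. h w * complex_of_real (gauss_kernel \<sigma> ((1 / k) *\<^sub>R b - w)) \<partial>lborel)"
    by (simp only: integrand integral_mult_right_zero)
  also have "\<dots> = 0"
    using conv[OF \<open>\<sigma> > 0\<close>] by simp
  finally show ?thesis .
qed

lemma fourier_inversion:
  fixes g :: "real^'n::finite \<Rightarrow> complex"
  assumes g: "integrable lborel g" and G: "integrable lborel (fourier g)"
  shows "AE w in lborel. fourier_inv (fourier g) w = g w"
proof -
  define u where "u = fourier_inv (fourier g)"
  define h where "h w = g w - u w" for w
  have [measurable]: "g \<in> borel_measurable borel" "fourier g \<in> borel_measurable borel"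
    using g G by auto
  have [measurable]: "u \<in> borel_measurable borel"
    unfolding u_def fourier_inv_def by measurable
  have gK: "integrable lborel (\<lambda>w. g w * complex_of_real (gauss_kernel \<sigma> (a - w)))" if "\<sigma> > 0" for \<sigma> a
    by (rule integrable_mult_gauss_kernel_reflect[OF g that])
  have uK: "integrable lborel (\<lambda>w. u w * complex_of_real (gauss_kernel \<sigma> (a - w)))" if "\<sigma> > 0" for \<sigma> a
    by (rule integrable_bounded_mult_gauss_kernel_reflect[OF _ norm_fourier_inv_le[of "fourier g", folded u_def] that])
       measurable
  have conv: "(\<integral>w. h w * complex_of_real (gauss_kernel \<sigma> (a - w)) \<partial>lborel) = 0" if "\<sigma> > 0" for \<sigma> a
    using Bochner_Integration.integral_diff[OF gK[OF that, of a] uK[OF that, of a]]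
      gauss_smoothing_fourier_inv_fourier[OF g G that, of a, folded u_def]
    by (simp add: h_def algebra_simps)
  \<comment> \<open>\<open>h\<close> need not be integrable, but \<open>h\<close> damped by a Gaussian is\<close>
  have hK: "integrable lborel (\<lambda>w. h w * complex_of_real (gauss_kernel 1 w))"
    using Bochner_Integration.integrable_diff[OF gK[OF zero_less_one, of 0] uK[OF zero_less_one, of 0]] by (simp add: h_def algebra_simps)
  have "AE w in lborel. h w * complex_of_real (gauss_kernel 1 w) = 0"
    using hK by (intro AE_zero_if_box_integrals_zero integral_box_eq_0_if_gauss_convolutions_eq_0)
      (simp_all add: integral_mult_gauss_kernel_product_eq_0[OF conv])
  then show ?thesis
  proof eventually_elim
    case (elim w)
    moreover have "complex_of_real (gauss_kernel 1 w) \<noteq> 0"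
      using gauss_kernel_pos[of 1 w] by simp
    ultimately have "h w = 0"
      by simp
    then show ?case
      by (simp add: h_def u_def)
  qed
qed

section \<open>The Fourier slice theorem\<close>

lemma integrable_pair_lborel_affine_snd:
  fixes \<phi> :: "'a \<Rightarrow> real \<Rightarrow> 'b::{banach,second_countable_topology}"
  assumes M: "sigma_finite_measure M"
    and \<phi>: "integrable (M \<Otimes>\<^sub>M lborel) (\<lambda>(u, t). \<phi> u t)"
    and s[measurable]: "s \<in> borel_measurable M" and c: "c \<noteq> 0"
  shows "integrable (M \<Otimes>\<^sub>M lborel) (\<lambda>(u, k). \<phi> u ((k - s u) / c))"
proof -
  interpret pair_sigma_finite M "lborel :: real measure"
    using M by (simp add: pair_sigma_finite_def sigma_finite_lborel)
  have \<phi>m[measurable]: "(\<lambda>(u, t). \<phi> u t) \<in> borel_measurable (M \<Otimes>\<^sub>M lborel)"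
    using \<phi> by auto
  have slice: "(\<lambda>k. \<phi> u ((k - s u) / c)) = (\<lambda>k. \<phi> u (- s u / c + (1 / c) * k))" for u
    by (simp add: diff_divide_distrib)
  show ?thesis
  proof (rule Fubini_integrable)
    have "(\<lambda>p. (\<lambda>(u, t). \<phi> u t) (fst p, (snd p - s (fst p)) / c)) \<in> borel_measurable (M \<Otimes>\<^sub>M lborel)"
      by measurable
    then show "(\<lambda>(u, k). \<phi> u ((k - s u) / c)) \<in> borel_measurable (M \<Otimes>\<^sub>M lborel)"
      by (simp add: case_prod_beta')
    have "(\<integral>k. norm (\<phi> u ((k - s u) / c)) \<partial>lborel) = \<bar>c\<bar> * (\<integral>t. norm (\<phi> u t) \<partial>lborel)" for u
      using lborel_integral_real_affine[OF c, of "\<lambda>k. norm (\<phi> u ((k - s u) / c))" "s u"] c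
      by simp
    moreover have "integrable (M \<Otimes>\<^sub>M lborel) (\<lambda>(u, t). norm (\<phi> u t))"
      using \<phi> by (simp add: integrable_norm case_prod_beta')
    then have "integrable M (\<lambda>u. \<integral>t. norm (\<phi> u t) \<partial>lborel)"
      by (rule integrable_fst)
    ultimately show "integrable M (\<lambda>u. \<integral>k. norm (case (u, k) of (u, k) \<Rightarrow> \<phi> u ((k - s u) / c)) \<partial>lborel)"
      by simp
    show "AE u in M. integrable lborel (\<lambda>k. case (u, k) of (u, k) \<Rightarrow> \<phi> u ((k - s u) / c))"
      using AE_integrable_fst[OF \<phi>]
    proof eventually_elim
      case (elim u)
      then have "integrable lborel (\<lambda>k. \<phi> u (- s u / c + (1 / c) * k))"
        using c lborel_integrable_real_affine_iff[of "1 / c" "\<phi> u" "- s u / c"] by simp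
      then show ?case
        unfolding case_prod_conv slice .
    qed
  qed
qed

definition insert_coord :: "'n::finite \<Rightarrow> ('n \<Rightarrow> real) \<Rightarrow> real \<Rightarrow> real^'n" where
  "insert_coord j u t = (\<chi> i. if i = j then t else u i)"

lemma insert_coord_nth[simp]: "insert_coord j u t $ i = (if i = j then t else u i)"
  unfolding insert_coord_def by simp

lemma insert_coord_eq_sum: "insert_coord j u t = t *\<^sub>R axis j 1 + (\<Sum>i\<in>UNIV-{j}. u i *\<^sub>R axis i 1)"
  by (auto simp: vec_eq_iff axis_def sum.delta' if_distrib cong: if_cong)

lemma inner_insert_coord: "x \<bullet> insert_coord j u t = x $ j * t + (\<Sum>l\<in>UNIV - {j}. x $ l * u l)"
proof -
  have "x \<bullet> insert_coord j u t = (\<Sum>i\<in>UNIV. x $ i * insert_coord j u t $ i)" by (simp add: inner_vec_def)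
  also have "\<dots> = x $ j * insert_coord j u t $ j + (\<Sum>i\<in>UNIV - {j}. x $ i * insert_coord j u t $ i)"
    by (rule sum.remove) auto
  also have "(\<Sum>i\<in>UNIV - {j}. x $ i * insert_coord j u t $ i) = (\<Sum>l\<in>UNIV - {j}. x $ l * u l)"
    by (rule sum.cong) auto
  finally show ?thesis by simp
qed

abbreviation lborel_except :: "'n::finite \<Rightarrow> ('n \<Rightarrow> real) measure" where
  "lborel_except j \<equiv> PiM (UNIV - {j}) (\<lambda>_. lborel)"

lemma sigma_finite_lborel_except: "sigma_finite_measure (lborel_except j)"
proof -
  interpret product_sigma_finite "\<lambda>_::'n. lborel :: real measure" by standard
  show ?thesis by (rule sigma_finite) simp
qed

lemma pair_sigma_finite_lborel_except: "pair_sigma_finite (lborel_except j) (lborel :: real measure)"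
  unfolding pair_sigma_finite_def using sigma_finite_lborel_except sigma_finite_lborel by blast

lemma measurable_lborel_except_component:
  assumes i: "i \<noteq> j"
  shows "(\<lambda>p. fst p i) \<in> borel_measurable (lborel_except j \<Otimes>\<^sub>M lborel)"
proof -
  have "(\<lambda>x. x i) \<in> measurable (lborel_except j) (lborel::real measure)"
    by (rule measurable_component_singleton) (use i in simp)
  hence "(\<lambda>x. x i) \<in> borel_measurable (lborel_except j)" by simp
  thus ?thesis by (rule measurable_compose[OF measurable_fst])
qed

lemma measurable_insert_coord_comp:
  assumes f: "f \<in> borel_measurable (lborel_except j \<Otimes>\<^sub>M lborel)"
  shows "(\<lambda>p. insert_coord j (fst p) (f p)) \<in> borel_measurable (lborel_except j \<Otimes>\<^sub>M lborel)"
proof -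
  have "(\<lambda>p. f p *\<^sub>R axis j 1 + (\<Sum>i\<in>UNIV-{j}. fst p i *\<^sub>R axis i (1::real))) \<in> borel_measurable (lborel_except j \<Otimes>\<^sub>M lborel)"
    by (intro borel_measurable_add borel_measurable_sum borel_measurable_scaleR borel_measurable_const f measurable_lborel_except_component) auto
  thus ?thesis by (simp add: insert_coord_eq_sum)
qed

lemma measurable_insert_coord[measurable]:
  "(\<lambda>p. insert_coord j (fst p) (snd p)) \<in> borel_measurable (lborel_except j \<Otimes>\<^sub>M lborel)"
  by (rule measurable_insert_coord_comp) measurable

lemma measurable_inner_except:
  "(\<lambda>u. \<Sum>l\<in>UNIV - {j}. (x::real^'n::finite) $ l * u l) \<in> borel_measurable (lborel_except j)"
proof (intro borel_measurable_sum borel_measurable_times borel_measurable_const)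
  fix i assume "i \<in> UNIV - {j}"
  then have "(\<lambda>u. u i) \<in> measurable (lborel_except j) (lborel :: real measure)"
    by (intro measurable_component_singleton)
  then show "(\<lambda>u. u i) \<in> borel_measurable (lborel_except j)"
    by simp
qed

lemma prod_Basis_vec: "(\<Prod>b\<in>(Basis :: (real^'n::finite) set). f b) = (\<Prod>i\<in>UNIV. f (axis i 1))"
proof -
  have e: "(Basis :: (real^'n) set) = (\<lambda>i. axis i 1) ` UNIV"
    by (auto simp: Basis_vec_def)
  have i: "inj_on (\<lambda>i::'n. axis i (1::real)) UNIV"
    by (auto simp: inj_on_def axis_eq_axis)
  have "(\<Prod>b\<in>(Basis :: (real^'n::finite) set). f b) = (\<Prod>b\<in>(\<lambda>i. axis i 1) ` UNIV. f b)"
    by (simp only: e)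
  also have "\<dots> = (\<Prod>i\<in>UNIV. f (axis i 1))"
    using prod.reindex[OF i, of f] by (simp add: o_def)
  finally show ?thesis .
qed

lemma lborel_eq_distr_insert_coord: "(lborel :: (real^'n::finite) measure) = distr (lborel_except j \<Otimes>\<^sub>M lborel) borel (\<lambda>p. insert_coord j (fst p) (snd p))"
proof (rule lborel_eqI)
  show "sets (distr (lborel_except j \<Otimes>\<^sub>M lborel) borel (\<lambda>p. insert_coord j (fst p) (snd p))) = sets borel" by simp
  fix l r :: "real^'n"
  assume le: "\<And>b. b \<in> Basis \<Longrightarrow> l \<bullet> b \<le> r \<bullet> b"
  have lei: "l $ i \<le> r $ i" for i using le[of "axis i 1"] by (simp add: inner_axis)
  let ?A = "PiE (UNIV - {j}) (\<lambda>i. {l$i<..<r$i})" and ?B = "{l$j<..<r$j}"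
  have pre: "(\<lambda>p. insert_coord j (fst p) (snd p)) -` box l r \<inter> space (lborel_except j \<Otimes>\<^sub>M lborel) = ?A \<times> ?B"
  proof (intro set_eqI iffI)
    fix p assume "p \<in> (\<lambda>p. insert_coord j (fst p) (snd p)) -` box l r \<inter> space (lborel_except j \<Otimes>\<^sub>M lborel)"
    hence b: "insert_coord j (fst p) (snd p) \<in> box l r" and s: "fst p \<in> space (lborel_except j)"
      by (auto simp: space_pair_measure)
    from b have "\<forall>i. l$i < (if i = j then snd p else fst p i) \<and> (if i = j then snd p else fst p i) < r$i"
      by (simp add: mem_box_cart)
    moreover from s have "fst p \<in> extensional (UNIV - {j})" by (simp add: space_PiM PiE_def)
    ultimately show "p \<in> ?A \<times> ?B"
      by (cases p) (auto simp: PiE_def Pi_def split: if_splits; metis)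
  next
    fix p assume p: "p \<in> ?A \<times> ?B"
    hence "insert_coord j (fst p) (snd p) \<in> box l r" by (cases p) (auto simp: mem_box_cart PiE_def Pi_def)
    moreover from p have "fst p \<in> space (lborel_except j)" by (cases p) (auto simp: space_PiM PiE_def Pi_def)
    ultimately show "p \<in> (\<lambda>p. insert_coord j (fst p) (snd p)) -` box l r \<inter> space (lborel_except j \<Otimes>\<^sub>M lborel)"
      by (cases p) (auto simp: space_pair_measure)
  qed
  have "emeasure (distr (lborel_except j \<Otimes>\<^sub>M lborel) borel (\<lambda>p. insert_coord j (fst p) (snd p))) (box l r)
      = emeasure (lborel_except j \<Otimes>\<^sub>M lborel) (?A \<times> ?B)"
    by (subst emeasure_distr) (simp_all add: pre)
  also have "\<dots> = emeasure (lborel_except j) ?A * emeasure lborel ?B"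
  proof (rule sigma_finite_measure.emeasure_pair_measure_Times[OF sigma_finite_lborel])
    show "?A \<in> sets (lborel_except j)" by (rule sets_PiM_I_finite) auto
  qed simp
  also have "emeasure (lborel_except j) ?A = (\<Prod>i\<in>UNIV - {j}. emeasure lborel {l$i<..<r$i})"
  proof -
    interpret product_sigma_finite "\<lambda>_::'n. lborel :: real measure" by standard
    show ?thesis by (rule emeasure_PiM) auto
  qed
  also have "(\<Prod>i\<in>UNIV - {j}. emeasure lborel {l$i<..<r$i}) * emeasure lborel ?B
      = ennreal (\<Prod>i\<in>UNIV. r$i - l$i)"
  proof -
    have "(\<Prod>i\<in>UNIV - {j}. emeasure lborel {l$i<..<r$i}) = ennreal (\<Prod>i\<in>UNIV - {j}. r$i - l$i)"
      using lei by (simp add: prod_ennreal)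
    moreover have "emeasure lborel ?B = ennreal (r$j - l$j)" using lei by simp
    moreover have "(\<Prod>i\<in>UNIV. r$i - l$i) = (r$j - l$j) * (\<Prod>i\<in>UNIV - {j}. r$i - l$i)"
      by (simp add: prod.remove)
    ultimately show ?thesis using lei
      by (simp add: ennreal_mult'[symmetric] prod_nonneg mult.commute)
  qed
  also have "(\<Prod>i\<in>UNIV. r$i - l$i) = (\<Prod>b\<in>Basis. (r - l) \<bullet> b)"
    by (simp add: prod_Basis_vec inner_axis)
  finally show "emeasure (distr (lborel_except j \<Otimes>\<^sub>M lborel) borel (\<lambda>p. insert_coord j (fst p) (snd p))) (box l r) = (\<Prod>b\<in>Basis. (r - l) \<bullet> b)" .
qed

lemma integrable_insert_coord_iff:
  fixes h :: "real^'n::finite \<Rightarrow> 'b::{banach,second_countable_topology}"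
  assumes "h \<in> borel_measurable borel"
  shows "integrable (lborel_except j \<Otimes>\<^sub>M lborel) (\<lambda>p. h (insert_coord j (fst p) (snd p))) \<longleftrightarrow> integrable lborel h"
  using integrable_distr_eq[OF measurable_insert_coord assms, of j]
  by (simp flip: lborel_eq_distr_insert_coord)

lemma integral_insert_coord:
  fixes h :: "real^'n::finite \<Rightarrow> 'b::{banach,second_countable_topology}"
  assumes "h \<in> borel_measurable borel"
  shows "(\<integral>p. h (insert_coord j (fst p) (snd p)) \<partial>(lborel_except j \<Otimes>\<^sub>M lborel)) = (\<integral>y. h y \<partial>lborel)"
  using integral_distr[OF measurable_insert_coord assms, of j]
  by (simp flip: lborel_eq_distr_insert_coord)

abbreviation iexp_neg :: "real \<Rightarrow> complex" where "iexp_neg t \<equiv> exp (- \<i> * complex_of_real t)"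

lemma norm_iexp_neg[simp]: "norm (iexp_neg t) = 1"
  by (simp add: norm_exp_eq_Re)

lemma fourier_slice:
  fixes g :: "real^'n::finite \<Rightarrow> complex" and x :: "real^'n"
  assumes g: "integrable lborel g" and xj: "x $ j \<noteq> 0"
  shows "(\<integral>k. complex_of_real (1 / \<bar>x $ j\<bar>) *
            (\<integral>u. g (insert_coord j u ((k - (\<Sum>l\<in>UNIV - {j}. x $ l * u l)) / x $ j)) \<partial>lborel_except j) * iexp_neg k \<partial>lborel)
       = (\<integral>y. g y * iexp_neg (x \<bullet> y) \<partial>lborel)"
proof -
  define c where "c = x $ j"
  define s where "s u = (\<Sum>l\<in>UNIV - {j}. x $ l * u l)" for u :: "'n \<Rightarrow> real"
  define F where "F u t = g (insert_coord j u t) * iexp_neg (c * t + s u)" for u t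
  have c: "c \<noteq> 0"
    using xj c_def by simp
  interpret P: pair_sigma_finite "lborel_except j" "lborel :: real measure"
    by (rule pair_sigma_finite_lborel_except)
  have [measurable]: "g \<in> borel_measurable borel"
    using g by auto
  have s_meas: "s \<in> borel_measurable (lborel_except j)"
    unfolding s_def by (rule measurable_inner_except)
  have fm: "(\<lambda>y. g y * iexp_neg (x \<bullet> y)) \<in> borel_measurable borel"
    by measurable
  have fi: "integrable lborel (\<lambda>y. g y * iexp_neg (x \<bullet> y))"
    by (rule Bochner_Integration.integrable_bound[OF g]) (auto simp: norm_mult)
  have F_eq: "(\<lambda>p. g (insert_coord j (fst p) (snd p)) * iexp_neg (x \<bullet> insert_coord j (fst p) (snd p)))
      = (\<lambda>(u, t). F u t)"
    by (auto simp: fun_eq_iff F_def inner_insert_coord c_def s_def)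
  have F: "integrable (lborel_except j \<Otimes>\<^sub>M lborel) (\<lambda>(u, t). F u t)"
    using integrable_insert_coord_iff[OF fm, of j] fi F_eq by simp
  have F_subst: "F u ((k - s u) / c) = g (insert_coord j u ((k - s u) / c)) * iexp_neg k" for u k
    using c by (simp add: F_def)
  have G: "integrable (lborel_except j \<Otimes>\<^sub>M lborel)
      (\<lambda>(u, k). g (insert_coord j u ((k - s u) / c)) * iexp_neg k)"
    using integrable_pair_lborel_affine_snd[OF sigma_finite_lborel_except F s_meas c]
    by (simp add: F_subst)
  have slice: "(\<integral>t. F u t \<partial>lborel)
      = complex_of_real (1 / \<bar>c\<bar>) * (\<integral>k. g (insert_coord j u ((k - s u) / c)) * iexp_neg k \<partial>lborel)" for u
  proof -
    have "(\<integral>t. F u t \<partial>lborel) = \<bar>1/c\<bar> *\<^sub>R (\<integral>k. F u (- s u / c + (1/c) * k) \<partial>lborel)"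
      by (rule lborel_integral_real_affine) (use c in simp)
    also have "(\<lambda>k. F u (- s u / c + (1/c) * k)) = (\<lambda>k. g (insert_coord j u ((k - s u) / c)) * iexp_neg k)"
    proof
      fix k
      have "- s u / c + (1/c) * k = (k - s u) / c"
        using c by (simp add: field_simps)
      then show "F u (- s u / c + (1/c) * k) = g (insert_coord j u ((k - s u) / c)) * iexp_neg k"
        by (simp only: F_subst)
    qed
    finally show ?thesis
      by (simp add: scaleR_conv_of_real)
  qed
  have "(\<integral>k. complex_of_real (1 / \<bar>x $ j\<bar>) *
            (\<integral>u. g (insert_coord j u ((k - (\<Sum>l\<in>UNIV - {j}. x $ l * u l)) / x $ j)) \<partial>lborel_except j) * iexp_neg k \<partial>lborel)
      = complex_of_real (1 / \<bar>c\<bar>) *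
          (\<integral>k. (\<integral>u. g (insert_coord j u ((k - s u) / c)) * iexp_neg k \<partial>lborel_except j) \<partial>lborel)"
    by (simp add: c_def s_def mult.assoc)
  also have "\<dots> = complex_of_real (1 / \<bar>c\<bar>) *
          (\<integral>u. (\<integral>k. g (insert_coord j u ((k - s u) / c)) * iexp_neg k \<partial>lborel) \<partial>lborel_except j)"
    by (simp only: P.Fubini_integral[OF G])
  also have "\<dots> = (\<integral>u. (\<integral>t. F u t \<partial>lborel) \<partial>lborel_except j)"
    by (simp add: slice)
  also have "\<dots> = (\<integral>p. (\<lambda>(u, t). F u t) p \<partial>(lborel_except j \<Otimes>\<^sub>M lborel))"
    by (rule P.integral_fst[OF F])
  also have "\<dots> = (\<integral>y. g y * iexp_neg (x \<bullet> y) \<partial>lborel)"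
    using integral_insert_coord[OF fm, of j] F_eq by simp
  finally show ?thesis .
qed

lemma fourier1_radon:
  fixes g :: "real^'n::finite \<Rightarrow> complex"
  assumes g: "integrable lborel g" and x: "x \<noteq> 0"
  shows "fourier1 (radon g x) 1 = fourier g x"
proof -
  define j where "j = (SOME j. x $ j \<noteq> 0)"
  have "\<exists>j. x $ j \<noteq> 0" using x by (auto simp: vec_eq_iff)
  hence xj: "x $ j \<noteq> 0" unfolding j_def by (rule someI_ex)
  have r: "radon g x k = complex_of_real (1 / \<bar>x $ j\<bar>) *
            (\<integral>u. g (insert_coord j u ((k - (\<Sum>l\<in>UNIV - {j}. x $ l * u l)) / x $ j)) \<partial>lborel_except j)" for k
    unfolding radon_def using x by (simp add: j_def[symmetric] Let_def insert_coord_def)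
  have "fourier1 (radon g x) 1 = (\<integral>k. complex_of_real (1 / \<bar>x $ j\<bar>) *
            (\<integral>u. g (insert_coord j u ((k - (\<Sum>l\<in>UNIV - {j}. x $ l * u l)) / x $ j)) \<partial>lborel_except j) * iexp_neg k \<partial>lborel)"
    unfolding fourier1_def r by simp
  also have "\<dots> = (\<integral>y. g y * iexp_neg (x \<bullet> y) \<partial>lborel)" by (rule fourier_slice[OF g xj])
  also have "\<dots> = fourier g x" unfolding fourier_def by simp
  finally show ?thesis .
qed

section \<open>The spanning problem\<close>

lemma fourier1_eq_fourier_if_half_second_deriv_radon:
  fixes h :: "real \<Rightarrow> real" and g :: "real^'n::finite \<Rightarrow> complex"
  assumes d: "\<And>k. h differentiable (at k)" "\<And>k. deriv h differentiable (at k)"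
    and h: "integrable lborel h" "integrable lborel (deriv h)" "integrable lborel (deriv (deriv h))"
    and R: "\<And>k. complex_of_real ((1/2) * deriv (deriv h) k) = radon g x k"
    and g: "integrable lborel g" and x: "x \<noteq> 0"
  shows "fourier1 (\<lambda>k. complex_of_real (h k)) 1 = - 2 * fourier g x"
proof -
  have D: "((\<lambda>k. complex_of_real (p k)) has_vector_derivative complex_of_real (deriv p k)) (at k)"
    if "p differentiable (at k)" for p :: "real \<Rightarrow> real" and k
    using that by (intro has_vector_derivative_of_real) (simp add: DERIV_deriv_iff_real_differentiable)
  have "fourier1 (\<lambda>k. complex_of_real (deriv h k)) 1 = \<i> * fourier1 (\<lambda>k. complex_of_real (h k)) 1"
    using fourier1_deriv[OF D[OF d(1)] integrable_of_real[OF h(1)] integrable_of_real[OF h(2)], of 1] by simp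
  moreover have "fourier1 (\<lambda>k. complex_of_real (deriv (deriv h) k)) 1
      = \<i> * fourier1 (\<lambda>k. complex_of_real (deriv h k)) 1"
    using fourier1_deriv[OF D[OF d(2)] integrable_of_real[OF h(2)] integrable_of_real[OF h(3)], of 1] by simp
  ultimately have "fourier1 (\<lambda>k. complex_of_real (deriv (deriv h) k)) 1
      = \<i> * (\<i> * fourier1 (\<lambda>k. complex_of_real (h k)) 1)"
    by simp
  moreover have "(\<lambda>k. complex_of_real (deriv (deriv h) k)) = (\<lambda>k. 2 * radon g x k)"
    by (auto simp flip: R)
  ultimately have "- fourier1 (\<lambda>k. complex_of_real (h k)) 1 = 2 * fourier g x"
    by (simp add: fourier1_cmult fourier1_radon[OF g x])
  then have "fourier1 (\<lambda>k. complex_of_real (h k)) 1 = - (2 * fourier g x)"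
    by (metis minus_minus)
  then show ?thesis
    by simp
qed

lemma fourier_inv_AE_eq_if_eq_fourier:
  fixes g G :: "real^'n::finite \<Rightarrow> complex"
  assumes g: "integrable lborel g" and G: "integrable lborel G" and c: "c \<noteq> 0"
    and GF: "\<And>x. x \<noteq> 0 \<Longrightarrow> G x = c * fourier g x"
  shows "AE w in lborel. fourier_inv G w = c * g w"
proof -
  have [measurable]: "g \<in> borel_measurable borel" "G \<in> borel_measurable borel"
    using g G by auto
  have [measurable]: "fourier g \<in> borel_measurable borel"
    unfolding fourier_def by measurable
  have ae: "AE x in lborel. G x = c * fourier g x"
    using AE_lborel_singleton[of 0] by eventually_elim (simp add: GF)
  have Fg: "integrable lborel (fourier g)"
  proof (rule integrable_cong_AE_imp)
    show "integrable lborel (\<lambda>x. inverse c * G x)"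
      using G by simp
    show "AE x in lborel. inverse c * G x = fourier g x"
      using ae by eventually_elim (simp add: c)
  qed measurable
  have inv: "fourier_inv G w = c * fourier_inv (fourier g) w" for w
  proof -
    have "(\<integral>\<xi>. G \<xi> * iexp (w \<bullet> \<xi>) \<partial>lborel) = (\<integral>\<xi>. c * (fourier g \<xi> * iexp (w \<bullet> \<xi>)) \<partial>lborel)"
    proof (rule integral_cong_AE)
      show "AE \<xi> in lborel. G \<xi> * iexp (w \<bullet> \<xi>) = c * (fourier g \<xi> * iexp (w \<bullet> \<xi>))"
        using ae by eventually_elim simp
    qed measurable
    then show ?thesis
      unfolding fourier_inv_def by (simp add: mult.left_commute)
  qed
  show ?thesis
    using fourier_inversion[OF g Fg] by eventually_elim (simp add: inv)
qed

lemma fourier_inv_uminus: "fourier_inv (\<lambda>x. - G x) w = - fourier_inv G w"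
  unfolding fourier_inv_def by simp

lemma fourier1_higher_deriv_family:
  fixes F :: "real^'n::finite \<Rightarrow> real \<Rightarrow> real"
  assumes "\<forall>x. Cn n (F x) \<and> (\<forall>j\<le>n. integrable lborel ((deriv ^^ j) (F x)))"
  shows "(\<lambda>x. fourier1 (\<lambda>k. (- \<i>) ^ n * complex_of_real ((deriv ^^ n) (F x) k)) 1)
       = (\<lambda>x. fourier1 (\<lambda>k. complex_of_real (F x k)) 1)"
  using assms by (intro ext fourier1_neg_i_pow_higher_deriv) auto

lemma fourier1_second_deriv_family:
  fixes F :: "real^'n::finite \<Rightarrow> real \<Rightarrow> real"
  assumes "\<forall>x. Cn 2 (F x) \<and> (\<forall>j\<le>2. integrable lborel ((deriv ^^ j) (F x)))"
  shows "(\<lambda>x. fourier1 (\<lambda>k. complex_of_real (F x k)) 1)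
       = (\<lambda>x. - fourier1 (\<lambda>k. complex_of_real ((deriv ^^ 2) (F x) k)) 1)"
  unfolding fourier1_higher_deriv_family[OF assms, symmetric]
  by (simp add: fourier1_cmult[of "- 1", simplified])

lemma fourier_inv_fourier1_eq_if_half_second_deriv_radon:
  fixes F :: "real^'n::finite \<Rightarrow> real \<Rightarrow> real" and g :: "real^'n \<Rightarrow> complex"
  assumes L1k: "\<And>x. integrable lborel (F x)"
    and L1x: "integrable lborel (\<lambda>x. fourier1 (\<lambda>k. complex_of_real (F x k)) 1)"
    and d: "\<And>x k. F x differentiable (at k)" "\<And>x k. deriv (F x) differentiable (at k)"
    and i: "\<And>x. integrable lborel (deriv (F x))" "\<And>x. integrable lborel (deriv (deriv (F x)))"
    and g: "integrable lborel g"
    and R: "\<And>x k. complex_of_real ((1/2) * deriv (deriv (F x)) k) = radon g x k"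
  shows "AE w in lborel. - (1/2) * fourier_inv (\<lambda>x. fourier1 (\<lambda>k. complex_of_real (F x k)) 1) w = g w"
proof -
  have "AE w in lborel. fourier_inv (\<lambda>x. fourier1 (\<lambda>k. complex_of_real (F x k)) 1) w = - 2 * g w"
    by (rule fourier_inv_AE_eq_if_eq_fourier[OF g L1x _
          fourier1_eq_fourier_if_half_second_deriv_radon[OF d L1k i R g]]) simp
  then show ?thesis
    by eventually_elim simp
qed

theorem mainTheorem8:
  fixes F :: "real^'n::finite \<Rightarrow> real \<Rightarrow> real"
  assumes A: "assumptionA F"
    and AHa: "classAHa F"
    and L1k: "\<And>x. integrable lborel (F x)"
    and L1x: "integrable lborel (\<lambda>x. fourier1 (\<lambda>k. complex_of_real (F x k)) 1)"
  defines "f \<equiv> (\<lambda>w. - (1/2) * fourier_inv (\<lambda>x. fourier1 (\<lambda>k. complex_of_real (F x k)) 1) w)"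
  shows "(\<forall>\<phi>\<in>schwartz_even. T_F F \<phi> = (\<integral>w. \<phi> w * f w \<partial>lborel))
    \<and> (\<forall>n. (\<forall>x. Cn n (F x) \<and> (\<forall>j\<le>n. integrable lborel ((deriv ^^ j) (F x)))) \<longrightarrow>
          (\<forall>w. f w = - (1/2) * fourier_inv (\<lambda>x. fourier1
                 (\<lambda>k. (- \<i>) ^ n * complex_of_real ((deriv ^^ n) (F x) k)) 1) w)
          \<and> (n = 2 \<longrightarrow> (\<forall>w. f w = (1/2) * fourier_inv (\<lambda>x. fourier1
                 (\<lambda>k. complex_of_real ((deriv ^^ 2) (F x) k)) 1) w)))
    \<and> (\<forall>g :: real^'n \<Rightarrow> complex.
          ((\<forall>x k. F x differentiable (at k) \<and> deriv (F x) differentiable (at k))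
           \<and> (\<forall>x. integrable lborel (deriv (F x)) \<and> integrable lborel (deriv (deriv (F x))))
           \<and> integrable lborel g
           \<and> (\<forall>x k. complex_of_real ((1/2) * deriv (deriv (F x)) k) = radon g x k))
          \<longrightarrow> (AE w in lborel. f w = g w))"
proof (intro conjI allI ballI impI)
  fix \<phi> :: "real^'n \<Rightarrow> complex"
  assume "\<phi> \<in> schwartz_even"
  then show "T_F F \<phi> = (\<integral>w. \<phi> w * f w \<partial>lborel)"
    unfolding f_def schwartz_even_def using T_F_eq_integral[OF L1x] by blast
next
  fix n w
  assume "\<forall>x. Cn n (F x) \<and> (\<forall>j\<le>n. integrable lborel ((deriv ^^ j) (F x)))"
  from fourier1_higher_deriv_family[OF this]
  show "f w = - (1/2) * fourier_inv (\<lambda>x. fourier1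
               (\<lambda>k. (- \<i>) ^ n * complex_of_real ((deriv ^^ n) (F x) k)) 1) w"
    unfolding f_def by simp
next
  fix n :: nat and w
  assume "\<forall>x. Cn n (F x) \<and> (\<forall>j\<le>n. integrable lborel ((deriv ^^ j) (F x)))" and "n = 2"
  then show "f w = (1/2) * fourier_inv (\<lambda>x. fourier1
               (\<lambda>k. complex_of_real ((deriv ^^ 2) (F x) k)) 1) w"
    unfolding f_def by (simp add: fourier1_second_deriv_family fourier_inv_uminus)
next
  fix g :: "real^'n \<Rightarrow> complex"
  assume "(\<forall>x k. F x differentiable (at k) \<and> deriv (F x) differentiable (at k))
         \<and> (\<forall>x. integrable lborel (deriv (F x)) \<and> integrable lborel (deriv (deriv (F x))))
         \<and> integrable lborel g
         \<and> (\<forall>x k. complex_of_real ((1/2) * deriv (deriv (F x)) k) = radon g x k)"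
  then show "AE w in lborel. f w = g w"
    unfolding f_def by (intro fourier_inv_fourier1_eq_if_half_second_deriv_radon[OF L1k L1x]) blast+
qed

end
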